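(* Let $G$ be a compact group with Haar measure $\mu$ normalized so that $\mu(G)=1$, let $f$ be a bounded measurable function on $G$, and let $\operatorname P_f$ be the operator on $L^2(G)$ of pointwise multiplication by $f$. Let $\operatorname R$ be an operator on $L^2(G)$ which commutes with left multiplication by elements of $G$, so that (equivalently) there are linear operators $\operatorname R_\rho$ on the representation spaces of the $\rho\in\hat G$ with $\operatorname R\cdot g(x)=\sum_{\rho\in\hat G} d_\rho\operatorname{tr}[\operatorname R_\rho\hat g(\rho)\rho(x)]$ for all $g\in L^2(G)$. Then $$\|\operatorname P_f\operatorname R\|_2^2=\|f\|_2^2\sum_{\rho\in\hat G} d_\rho\|\operatorname R_\rho\|_2^2.$$
   Context: $\hat G$ is the set of (equivalence classes of) irreducible unitary representations of $G$, $d_\rho$ the dimension of $\rho$, $\hat g(\rho)=\int_G g(x)\rho(x)^\dagger\,d\mu(x)$. Left multiplication is $[\operatorname L_x g](y)=g(x^{-1}y)$. For operators $\|\cdot\|_2$ is the Hilbert–Schmidt norm (possibly infinite); for $f$ it is the $L^2$-norm. *)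

theory Defs
  imports "HOL-Analysis.Analysis" "HOL-Probability.Probability"
begin

text \<open>Compact (Hausdorff) topological groups, written additively (group_add need not be
commutative): the group product is x + y, the inverse is - x, the unit is 0.\<close>

definition compact_group :: "'g::{group_add,t2_space} itself \<Rightarrow> bool" where
  "compact_group _ \<longleftrightarrow> compact (UNIV :: 'g set)
     \<and> continuous_on UNIV (\<lambda>p::'g \<times> 'g. fst p + snd p)
     \<and> continuous_on UNIV (\<lambda>x::'g. - x)"

definition haar_prob :: "'g::{group_add,t2_space} measure \<Rightarrow> bool" where
  "haar_prob \<mu> \<longleftrightarrow> prob_space \<mu> \<and> sets \<mu> = sets borel
     \<and> (\<forall>x A. A \<in> sets borel \<longrightarrow> emeasure \<mu> ((\<lambda>y. x + y) ` A) = emeasure \<mu> A)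
     \<and> (\<forall>A \<in> sets borel. emeasure \<mu> A = (INF U \<in> {U. open U \<and> A \<subseteq> U}. emeasure \<mu> U))
     \<and> (\<forall>U. open U \<longrightarrow> emeasure \<mu> U = (SUP K \<in> {K. compact K \<and> K \<subseteq> U}. emeasure \<mu> K))"

definition left_mult :: "'g::group_add \<Rightarrow> ('g \<Rightarrow> complex) \<Rightarrow> 'g \<Rightarrow> complex" where
  "left_mult x g = (\<lambda>y. g (- x + y))"

definition L2 :: "'g measure \<Rightarrow> ('g \<Rightarrow> complex) set" where
  "L2 \<mu> = {g. g \<in> borel_measurable \<mu> \<and> integrable \<mu> (\<lambda>x. (cmod (g x))\<^sup>2)}"

definition L2_inner :: "'g measure \<Rightarrow> ('g \<Rightarrow> complex) \<Rightarrow> ('g \<Rightarrow> complex) \<Rightarrow> complex" where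
  "L2_inner \<mu> g h = (\<integral>x. g x * cnj (h x) \<partial>\<mu>)"

definition L2_norm_sq :: "'g measure \<Rightarrow> ('g \<Rightarrow> complex) \<Rightarrow> ennreal" where
  "L2_norm_sq \<mu> g = (\<integral>\<^sup>+ x. ennreal ((cmod (g x))\<^sup>2) \<partial>\<mu>)"

text \<open>Squared Hilbert--Schmidt norm of an operator T on L^2(mu) (possibly infinite): supremum over
finite orthonormal families E of the sum of ||T e||^2 (equal to the sum over an orthonormal basis).\<close>
definition orthonormal_L2 :: "'g measure \<Rightarrow> ('g \<Rightarrow> complex) set \<Rightarrow> bool" where
  "orthonormal_L2 \<mu> E \<longleftrightarrow> E \<subseteq> L2 \<mu>
     \<and> (\<forall>e\<in>E. \<forall>e'\<in>E. L2_inner \<mu> e e' = (if e = e' then 1 else 0))"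

definition HS_norm_sq :: "'g measure \<Rightarrow> (('g \<Rightarrow> complex) \<Rightarrow> ('g \<Rightarrow> complex)) \<Rightarrow> ennreal" where
  "HS_norm_sq \<mu> T = (SUP E \<in> {E. finite E \<and> orthonormal_L2 \<mu> E}. \<Sum>e\<in>E. L2_norm_sq \<mu> (T e))"

text \<open>d x d complex matrices are represented as functions nat => nat => complex, only the entries
with indices < d being relevant; vectors of C^d as nat => complex vanishing at indices >= d.\<close>

definition cvecs :: "nat \<Rightarrow> (nat \<Rightarrow> complex) set" where
  "cvecs d = {v. \<forall>k\<ge>d. v k = 0}"

definition mat_vec :: "nat \<Rightarrow> (nat \<Rightarrow> nat \<Rightarrow> complex) \<Rightarrow> (nat \<Rightarrow> complex) \<Rightarrow> nat \<Rightarrow> complex" where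
  "mat_vec d A v = (\<lambda>a. if a < d then (\<Sum>b<d. A a b * v b) else 0)"

definition mat_prod :: "nat \<Rightarrow> (nat \<Rightarrow> nat \<Rightarrow> complex) \<Rightarrow> (nat \<Rightarrow> nat \<Rightarrow> complex) \<Rightarrow> nat \<Rightarrow> nat \<Rightarrow> complex" where
  "mat_prod d A B = (\<lambda>a b. \<Sum>k<d. A a k * B k b)"

definition mat_trace :: "nat \<Rightarrow> (nat \<Rightarrow> nat \<Rightarrow> complex) \<Rightarrow> complex" where
  "mat_trace d A = (\<Sum>a<d. A a a)"

definition mat_HS_norm_sq :: "nat \<Rightarrow> (nat \<Rightarrow> nat \<Rightarrow> complex) \<Rightarrow> real" where
  "mat_HS_norm_sq d A = (\<Sum>a<d. \<Sum>b<d. (cmod (A a b))\<^sup>2)"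

definition is_unitary_mat :: "nat \<Rightarrow> (nat \<Rightarrow> nat \<Rightarrow> complex) \<Rightarrow> bool" where
  "is_unitary_mat d U \<longleftrightarrow> (\<forall>a<d. \<forall>b<d. (\<Sum>k<d. U a k * cnj (U b k)) = (if a = b then 1 else 0))"

definition unitary_rep :: "nat \<Rightarrow> ('g::{group_add,topological_space} \<Rightarrow> nat \<Rightarrow> nat \<Rightarrow> complex) \<Rightarrow> bool" where
  "unitary_rep d \<rho> \<longleftrightarrow>
     (\<forall>x y. \<forall>a<d. \<forall>b<d. \<rho> (x + y) a b = mat_prod d (\<rho> x) (\<rho> y) a b)
     \<and> (\<forall>x. is_unitary_mat d (\<rho> x))
     \<and> (\<forall>a<d. \<forall>b<d. continuous_on UNIV (\<lambda>x. \<rho> x a b))"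

definition irreducible_rep :: "nat \<Rightarrow> ('g::{group_add,topological_space} \<Rightarrow> nat \<Rightarrow> nat \<Rightarrow> complex) \<Rightarrow> bool" where
  "irreducible_rep d \<rho> \<longleftrightarrow> unitary_rep d \<rho> \<and> d > 0 \<and>
     (\<forall>V. V \<subseteq> cvecs d \<and> (\<lambda>_. 0) \<in> V
          \<and> (\<forall>v\<in>V. \<forall>w\<in>V. (\<lambda>k. v k + w k) \<in> V)
          \<and> (\<forall>c. \<forall>v\<in>V. (\<lambda>k. c * v k) \<in> V)
          \<and> (\<forall>x. \<forall>v\<in>V. mat_vec d (\<rho> x) v \<in> V)
        \<longrightarrow> V = {\<lambda>_. 0} \<or> V = cvecs d)"

definition equiv_rep :: "nat \<Rightarrow> ('g \<Rightarrow> nat \<Rightarrow> nat \<Rightarrow> complex) \<Rightarrow> nat \<Rightarrow> ('g \<Rightarrow> nat \<Rightarrow> nat \<Rightarrow> complex) \<Rightarrow> bool" where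
  "equiv_rep d \<rho> d' \<sigma> \<longleftrightarrow> d = d' \<and> (\<exists>U. is_unitary_mat d U \<and>
     (\<forall>x. \<forall>a<d. \<forall>b<d. mat_prod d U (\<rho> x) a b = mat_prod d (\<sigma> x) U a b))"

text \<open>A complete system of representatives (rho_i, i in I, of dimension d_i) of G-hat.\<close>
definition dual_reps :: "'g::{group_add,topological_space} itself \<Rightarrow> 'i set \<Rightarrow> ('i \<Rightarrow> nat)
    \<Rightarrow> ('i \<Rightarrow> 'g \<Rightarrow> nat \<Rightarrow> nat \<Rightarrow> complex) \<Rightarrow> bool" where
  "dual_reps _ I d \<rho> \<longleftrightarrow>
     (\<forall>i\<in>I. irreducible_rep (d i) (\<rho> i))
     \<and> (\<forall>i\<in>I. \<forall>j\<in>I. equiv_rep (d i) (\<rho> i) (d j) (\<rho> j) \<longrightarrow> i = j)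
     \<and> (\<forall>n (\<sigma>::'g \<Rightarrow> nat \<Rightarrow> nat \<Rightarrow> complex). irreducible_rep n \<sigma> \<longrightarrow>
          (\<exists>i\<in>I. equiv_rep n \<sigma> (d i) (\<rho> i)))"

definition fourier_coeff :: "'g measure \<Rightarrow> ('g \<Rightarrow> complex) \<Rightarrow> ('g \<Rightarrow> nat \<Rightarrow> nat \<Rightarrow> complex)
    \<Rightarrow> nat \<Rightarrow> nat \<Rightarrow> complex" where
  "fourier_coeff \<mu> g \<rho> = (\<lambda>a b. \<integral>x. g x * cnj (\<rho> x b a) \<partial>\<mu>)"

definition mult_op :: "('g \<Rightarrow> complex) \<Rightarrow> ('g \<Rightarrow> complex) \<Rightarrow> 'g \<Rightarrow> complex" where
  "mult_op f g = (\<lambda>x. f x * g x)"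

end

theory Submission
  imports Defs "Jordan_Normal_Form.Char_Poly"
begin

text \<open>
  The matrix coefficients \<open>sqrt d\<^sub>\<rho> \<rho>\<^sub>a\<^sub>b\<close> of the irreducible representations form an
  orthonormal family (Schur orthogonality), and the expansion hypothesis forces \<open>R\<close> to map such a
  coefficient to \<open>sqrt d\<^sub>\<rho> (\<rho>(x) R\<^sub>\<rho>)\<^sub>a\<^sub>b\<close>. Since \<open>\<rho>(x)\<close> is unitary, the Hilbert--Schmidt
  norm of \<open>\<rho>(x) R\<^sub>\<rho>\<close> does not depend on \<open>x\<close>, so summing \<open>\<parallel>f R \<psi>\<parallel>\<^sup>2\<close> over the coefficients of
  finitely many \<open>\<rho>\<close> gives \<open>\<parallel>f\<parallel>\<^sup>2\<close> times the corresponding partial sum of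
  \<open>\<Sum> d\<^sub>\<rho> \<parallel>R\<^sub>\<rho>\<parallel>\<^sup>2\<close>; this is the lower bound.

  Conversely, a truncated expansion of \<open>R e\<close> evaluated at \<open>x\<close> is the inner product of \<open>e\<close> with a
  kernel whose squared norm is that same partial sum, so by Bessel's inequality the truncations over
  a finite orthonormal family contribute at most \<open>\<parallel>f\<parallel>\<^sup>2\<close> times the partial sum. The truncation
  errors are absorbed using \<open>\<bar>u + v\<bar>\<^sup>2 \<le> (1 + t) \<bar>u\<bar>\<^sup>2 + (1 + 1/t) \<bar>v\<bar>\<^sup>2\<close> and letting
  the error and then \<open>t\<close> tend to \<open>0\<close>.
\<close>

lemma mat_vec_eigenvector_exists:
  fixes M :: "nat \<Rightarrow> nat \<Rightarrow> complex"
  assumes "0 < d"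
  shows "\<exists>l v. v \<in> cvecs d \<and> v \<noteq> (\<lambda>_. 0) \<and> mat_vec d M v = (\<lambda>k. l * v k)"
proof -
  define A where "A = Matrix.mat d d (\<lambda>(a, b). M a b)"
  have A: "A \<in> carrier_mat d d" unfolding A_def by simp
  obtain as where as: "char_poly A = (\<Prod>a \<leftarrow> as. [:- a, 1:])" "length as = d"
    using char_poly_factorized[OF A] by blast
  then obtain l where l: "l \<in> set as" using assms by (cases as) auto
  have "poly (char_poly A) l = 0" unfolding as(1) using l
    by (induction as) (auto simp: poly_prod_list)
  then have "eigenvalue A l" using eigenvalue_root_char_poly[OF A] by simp
  then obtain v where "eigenvector A v l" unfolding eigenvalue_def by blast
  then have v: "v \<in> carrier_vec d" "v \<noteq> 0\<^sub>v d" "A *\<^sub>v v = l \<cdot>\<^sub>v v"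
    using A unfolding eigenvector_def by auto
  define w where "w k = (if k < d then v $ k else 0)" for k
  have "w \<noteq> (\<lambda>_. 0)"
  proof
    assume "w = (\<lambda>_. 0)"
    then have "\<And>k. k < d \<Longrightarrow> v $ k = 0" unfolding w_def by metis
    then have "v = 0\<^sub>v d" using v(1) by (intro eq_vecI) auto
    with v(2) show False by simp
  qed
  moreover have "mat_vec d M w a = l * w a" for a
  proof (cases "a < d")
    case True
    have "(A *\<^sub>v v) $ a = (\<Sum>b<d. M a b * w b)"
      using True v(1) unfolding A_def w_def
      by (auto simp: scalar_prod_def lessThan_atLeast0 intro!: sum.cong)
    then show ?thesis using True v unfolding mat_vec_def w_def by auto
  qed (simp add: mat_vec_def w_def)
  moreover have "w \<in> cvecs d" unfolding cvecs_def w_def by auto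
  ultimately show ?thesis by blast
qed

lemma sum_mult_delta_right:
  "b < (d::nat) \<Longrightarrow> (\<Sum>m<d. f m * (if m = b then 1 else 0)) = (f b :: 'a::semiring_1)"
  by (subst sum.cong[OF refl, of _ _ "\<lambda>m. if m = b then f m else 0"]) (auto simp: sum.delta)

lemma mat_prod_assoc:
  "mat_prod n2 (mat_prod n1 A B) C a b = mat_prod n1 A (mat_prod n2 B C) a b"
  unfolding mat_prod_def sum_distrib_right sum_distrib_left mult.assoc by (rule sum.swap)

lemma mat_prod_cong_right:
  "(\<And>m. m < n \<Longrightarrow> X m b = Y m b) \<Longrightarrow> mat_prod n A X a b = mat_prod n A Y a b"
  unfolding mat_prod_def by (intro sum.cong) auto

lemma mat_prod_cong_left:
  "(\<And>m. m < n \<Longrightarrow> X a m = Y a m) \<Longrightarrow> mat_prod n X B a b = mat_prod n Y B a b"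
  unfolding mat_prod_def by (intro sum.cong) auto

lemma mat_vec_mat_vec: "mat_vec d A (mat_vec d B u) = mat_vec d (mat_prod d A B) u"
proof
  fix a
  show "mat_vec d A (mat_vec d B u) a = mat_vec d (mat_prod d A B) u a"
  proof (cases "a < d")
    case True
    have "(\<Sum>b<d. A a b * mat_vec d B u b) = (\<Sum>b<d. A a b * (\<Sum>c<d. B b c * u c))"
      unfolding mat_vec_def by (intro sum.cong) auto
    also have "\<dots> = (\<Sum>c<d. (\<Sum>b<d. A a b * B b c) * u c)"
      unfolding sum_distrib_right sum_distrib_left mult.assoc by (rule sum.swap)
    finally show ?thesis using True by (simp add: mat_vec_def mat_prod_def)
  qed (simp add: mat_vec_def)
qed

lemma mat_vec_cong:
  "(\<And>a b. a < d \<Longrightarrow> b < d \<Longrightarrow> A a b = B a b) \<Longrightarrow> mat_vec d A u = mat_vec d B u"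
  unfolding mat_vec_def by (intro ext) auto

lemma mat_vec_scale: "mat_vec d A (\<lambda>k. c * u k) = (\<lambda>k. c * mat_vec d A u k)"
  unfolding mat_vec_def by (auto simp: sum_distrib_left mult_ac)

lemma mat_vec_add: "mat_vec d A (\<lambda>k. u k + w k) = (\<lambda>k. mat_vec d A u k + mat_vec d A w k)"
  unfolding mat_vec_def by (auto simp: sum.distrib distrib_left)

lemma mat_vec_in_cvecs: "mat_vec d A u \<in> cvecs d"
  unfolding mat_vec_def cvecs_def by auto

definition mat_adjoint :: "(nat \<Rightarrow> nat \<Rightarrow> complex) \<Rightarrow> nat \<Rightarrow> nat \<Rightarrow> complex" where
  "mat_adjoint M = (\<lambda>a b. cnj (M b a))"

lemma trace_mat_prod_adjoint:
  "(\<Sum>a<d2. mat_prod d1 (mat_adjoint M) M a a) = (\<Sum>a<d1. mat_prod d2 M (mat_adjoint M) a a)"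
  unfolding mat_prod_def mat_adjoint_def by (subst sum.swap) (simp only: mult.commute)

lemma mat_prod_adjoint_diag:
  "mat_prod d M (mat_adjoint M) a a = of_real (\<Sum>k<d. (cmod (M a k))\<^sup>2)"
  unfolding mat_prod_def mat_adjoint_def of_real_sum complex_norm_square ..

lemma mat_trace_mat_prod3:
  "mat_trace d (mat_prod d (mat_prod d A B) C) = (\<Sum>c<d. \<Sum>b<d. mat_prod d C A c b * B b c)"
proof -
  have "mat_trace d (mat_prod d (mat_prod d A B) C) = (\<Sum>a<d. \<Sum>c<d. \<Sum>b<d. A a b * B b c * C c a)"
    unfolding mat_trace_def mat_prod_def sum_distrib_right by simp
  also have "\<dots> = (\<Sum>c<d. \<Sum>b<d. \<Sum>a<d. A a b * B b c * C c a)"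
    by (subst sum.swap) (rule sum.cong[OF refl], rule sum.swap)
  finally show ?thesis
    unfolding mat_prod_def sum_distrib_right by (simp add: mult_ac)
qed

subsection \<open>Unitary representations\<close>

lemma unitary_rep_add:
  "unitary_rep d \<rho> \<Longrightarrow> a < d \<Longrightarrow> b < d \<Longrightarrow> \<rho> (x + y) a b = (\<Sum>k<d. \<rho> x a k * \<rho> y k b)"
  unfolding unitary_rep_def mat_prod_def by blast

lemma unitary_rep_rows:
  "unitary_rep d \<rho> \<Longrightarrow> a < d \<Longrightarrow> b < d \<Longrightarrow>
   (\<Sum>k<d. \<rho> x a k * cnj (\<rho> x b k)) = (if a = b then 1 else 0)"
  unfolding unitary_rep_def is_unitary_mat_def by blast

lemma unitary_rep_continuous:
  "unitary_rep d \<rho> \<Longrightarrow> a < d \<Longrightarrow> b < d \<Longrightarrow> continuous_on UNIV (\<lambda>x. \<rho> x a b)"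
  unfolding unitary_rep_def by blast

lemma unitary_rows_cancel:
  fixes d :: nat
  assumes "\<And>m b. m < d \<Longrightarrow> b < d \<Longrightarrow> (\<Sum>k<d. V m k * cnj (V b k)) = (if m = b then 1 else 0)"
    and "b < d"
  shows "(\<Sum>k<d. (\<Sum>m<d. A m * V m k) * cnj (V b k)) = A b"
proof -
  have "(\<Sum>k<d. (\<Sum>m<d. A m * V m k) * cnj (V b k)) = (\<Sum>m<d. A m * (\<Sum>k<d. V m k * cnj (V b k)))"
    unfolding sum_distrib_right sum_distrib_left mult.assoc by (rule sum.swap)
  also have "\<dots> = (\<Sum>m<d. A m * (if m = b then 1 else 0))"
    using assms by (intro sum.cong) auto
  finally show ?thesis using sum_mult_delta_right[OF assms(2)] by simp
qed

lemma unitary_rep_zero: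
  assumes \<rho>: "unitary_rep d \<rho>" and ab: "a < d" "b < d"
  shows "\<rho> 0 a b = (if a = b then 1 else 0)"
proof -
  have "(if a = b then 1 else 0) = (\<Sum>k<d. \<rho> (0 + 0) a k * cnj (\<rho> 0 b k))"
    using unitary_rep_rows[OF \<rho> ab, of 0] by simp
  also have "\<dots> = (\<Sum>k<d. (\<Sum>m<d. \<rho> 0 a m * \<rho> 0 m k) * cnj (\<rho> 0 b k))"
    using unitary_rep_add[OF \<rho> ab(1), of _ 0 0] by (intro sum.cong) simp_all
  also have "\<dots> = \<rho> 0 a b"
    by (rule unitary_rows_cancel) (use unitary_rep_rows[OF \<rho>] ab in auto)
  finally show ?thesis by simp
qed

lemma unitary_rep_uminus:
  assumes \<rho>: "unitary_rep d \<rho>" and ab: "a < d" "b < d"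
  shows "\<rho> (- x) a b = cnj (\<rho> x b a)"
proof -
  have "\<rho> (- x) a b = (\<Sum>k<d. (\<Sum>m<d. \<rho> (- x) a m * \<rho> x m k) * cnj (\<rho> x b k))"
    by (rule unitary_rows_cancel[symmetric]) (use unitary_rep_rows[OF \<rho>] ab in auto)
  also have "\<dots> = (\<Sum>k<d. \<rho> (- x + x) a k * cnj (\<rho> x b k))"
    using unitary_rep_add[OF \<rho> ab(1), of _ "- x" x] by (intro sum.cong) simp_all
  also have "\<dots> = (\<Sum>k<d. cnj (\<rho> x b k) * (if k = a then 1 else 0))"
    using unitary_rep_zero[OF \<rho> ab(1)] by (intro sum.cong) auto
  also have "\<dots> = cnj (\<rho> x b a)" by (rule sum_mult_delta_right) fact
  finally show ?thesis .
qed

lemma unitary_rep_cols: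
  assumes \<rho>: "unitary_rep d \<rho>" and ab: "a < d" "b < d"
  shows "(\<Sum>k<d. cnj (\<rho> x k a) * \<rho> x k b) = (if a = b then 1 else 0)"
proof -
  have "(\<Sum>k<d. cnj (\<rho> x k a) * \<rho> x k b) = (\<Sum>k<d. \<rho> (- x) a k * \<rho> x k b)"
    using unitary_rep_uminus[OF \<rho> ab(1)] by (intro sum.cong) auto
  also have "\<dots> = \<rho> (- x + x) a b" using unitary_rep_add[OF \<rho> ab, of "- x" x] by simp
  finally show ?thesis using unitary_rep_zero[OF \<rho> ab] by simp
qed

lemma sum_cmod_square_unitary_mult:
  fixes U :: "nat \<Rightarrow> nat \<Rightarrow> complex"
  assumes cols: "\<And>a a'. a < d \<Longrightarrow> a' < d \<Longrightarrow> (\<Sum>p<d. cnj (U p a') * U p a) = (if a' = a then 1 else 0)"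
  shows "(\<Sum>p<d. (\<Sum>a<d. U p a * v a) * cnj (\<Sum>a<d. U p a * v a)) = (\<Sum>a<d. v a * cnj (v a))"
proof -
  have "(\<Sum>p<d. (\<Sum>a<d. U p a * v a) * cnj (\<Sum>a<d. U p a * v a))
      = (\<Sum>p<d. \<Sum>a<d. \<Sum>a'<d. (v a * cnj (v a')) * (cnj (U p a') * U p a))"
    unfolding cnj_sum sum_product by (simp add: mult_ac)
  also have "\<dots> = (\<Sum>a<d. \<Sum>a'<d. (v a * cnj (v a')) * (\<Sum>p<d. cnj (U p a') * U p a))"
    unfolding sum_distrib_left by (subst sum.swap) (rule sum.cong[OF refl], rule sum.swap)
  also have "\<dots> = (\<Sum>a<d. \<Sum>a'<d. if a' = a then v a * cnj (v a') else 0)"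
    using cols by (intro sum.cong refl) auto
  finally show ?thesis by simp
qed

lemma mat_HS_norm_sq_unitary_left:
  assumes \<rho>: "unitary_rep d \<rho>"
  shows "(\<Sum>a<d. \<Sum>b<d. (cmod (mat_prod d (\<rho> x) A a b))\<^sup>2) = mat_HS_norm_sq d A"
proof -
  have "complex_of_real (\<Sum>a<d. \<Sum>b<d. (cmod (mat_prod d (\<rho> x) A a b))\<^sup>2)
      = (\<Sum>b<d. \<Sum>a<d. (\<Sum>k<d. \<rho> x a k * A k b) * cnj (\<Sum>k<d. \<rho> x a k * A k b))"
    unfolding of_real_sum complex_norm_square mat_prod_def by (rule sum.swap)
  also have "\<dots> = (\<Sum>b<d. \<Sum>k<d. A k b * cnj (A k b))"
    by (intro sum.cong refl sum_cmod_square_unitary_mult) (use unitary_rep_cols[OF \<rho>] in auto)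
  also have "\<dots> = complex_of_real (mat_HS_norm_sq d A)"
    unfolding mat_HS_norm_sq_def of_real_sum complex_norm_square by (rule sum.swap)
  finally show ?thesis by (simp only: of_real_eq_iff)
qed

subsection \<open>Schur's lemma\<close>

definition intertwines ::
    "nat \<Rightarrow> ('g \<Rightarrow> nat \<Rightarrow> nat \<Rightarrow> complex) \<Rightarrow> nat \<Rightarrow> ('g \<Rightarrow> nat \<Rightarrow> nat \<Rightarrow> complex)
      \<Rightarrow> (nat \<Rightarrow> nat \<Rightarrow> complex) \<Rightarrow> bool" where
  "intertwines d1 \<rho>1 d2 \<rho>2 M \<longleftrightarrow>
     (\<forall>x. \<forall>a<d1. \<forall>b<d2. mat_prod d2 M (\<rho>2 x) a b = mat_prod d1 (\<rho>1 x) M a b)"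

lemma intertwinesD:
  "intertwines d1 \<rho>1 d2 \<rho>2 M \<Longrightarrow> a < d1 \<Longrightarrow> b < d2 \<Longrightarrow>
     mat_prod d2 M (\<rho>2 x) a b = mat_prod d1 (\<rho>1 x) M a b"
  unfolding intertwines_def by blast

lemma intertwines_mat_prod:
  assumes M: "intertwines d1 \<rho>1 d2 \<rho>2 M" and N: "intertwines d2 \<rho>2 d3 \<rho>3 N"
  shows "intertwines d1 \<rho>1 d3 \<rho>3 (mat_prod d2 M N)"
  unfolding intertwines_def
proof (intro allI impI)
  fix x a b assume ab: "a < d1" "b < d3"
  have "mat_prod d3 (mat_prod d2 M N) (\<rho>3 x) a b = mat_prod d2 M (mat_prod d3 N (\<rho>3 x)) a b"
    by (rule mat_prod_assoc)
  also have "\<dots> = mat_prod d2 M (mat_prod d2 (\<rho>2 x) N) a b"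
    by (rule mat_prod_cong_right) (use intertwinesD[OF N] ab in auto)
  also have "\<dots> = mat_prod d2 (mat_prod d2 M (\<rho>2 x)) N a b"
    by (rule mat_prod_assoc[symmetric])
  also have "\<dots> = mat_prod d2 (mat_prod d1 (\<rho>1 x) M) N a b"
    by (rule mat_prod_cong_left) (use intertwinesD[OF M] ab in auto)
  also have "\<dots> = mat_prod d1 (\<rho>1 x) (mat_prod d2 M N) a b"
    by (rule mat_prod_assoc)
  finally show "mat_prod d3 (mat_prod d2 M N) (\<rho>3 x) a b = mat_prod d1 (\<rho>1 x) (mat_prod d2 M N) a b" .
qed

lemma intertwines_adjoint:
  assumes \<rho>1: "unitary_rep d1 \<rho>1" and \<rho>2: "unitary_rep d2 \<rho>2"
    and M: "intertwines d1 \<rho>1 d2 \<rho>2 M"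
  shows "intertwines d2 \<rho>2 d1 \<rho>1 (mat_adjoint M)"
  unfolding intertwines_def
proof (intro allI impI)
  fix y a b assume ab: "a < d2" "b < d1"
  \<comment> \<open>Unitarity turns the adjoint of the relation at \<open>- y\<close> into the relation at \<open>y\<close>.\<close>
  have "mat_prod d1 (mat_adjoint M) (\<rho>1 y) a b = cnj (mat_prod d1 (\<rho>1 (- y)) M b a)"
    unfolding mat_prod_def mat_adjoint_def
    by (auto simp: unitary_rep_uminus[OF \<rho>1 ab(2)] mult.commute intro!: sum.cong)
  also have "\<dots> = cnj (mat_prod d2 M (\<rho>2 (- y)) b a)" using intertwinesD[OF M ab(2) ab(1)] by simp
  also have "\<dots> = mat_prod d2 (\<rho>2 y) (mat_adjoint M) a b"
    unfolding mat_prod_def mat_adjoint_def by (simp add: unitary_rep_uminus[OF \<rho>2 _ ab(1)] mult.commute)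
  finally show "mat_prod d1 (mat_adjoint M) (\<rho>1 y) a b = mat_prod d2 (\<rho>2 y) (mat_adjoint M) a b" .
qed

lemma schur_lemma_scalar:
  assumes irr: "irreducible_rep d \<rho>" and M: "intertwines d \<rho> d \<rho> M"
  shows "\<exists>l. \<forall>a<d. \<forall>b<d. M a b = (if a = b then l else 0)"
proof -
  have "0 < d" using irr unfolding irreducible_rep_def by blast
  then obtain l v where v: "v \<in> cvecs d" "v \<noteq> (\<lambda>_. 0)" "mat_vec d M v = (\<lambda>k. l * v k)"
    using mat_vec_eigenvector_exists by blast
  define V where "V = {u \<in> cvecs d. mat_vec d M u = (\<lambda>k. l * u k)}"
  have "\<forall>x. \<forall>u\<in>V. mat_vec d (\<rho> x) u \<in> V"
  proof (intro allI ballI)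
    fix x u assume u: "u \<in> V"
    have "mat_vec d M (mat_vec d (\<rho> x) u) = mat_vec d (mat_prod d (\<rho> x) M) u"
      by (simp add: mat_vec_mat_vec intertwinesD[OF M] cong: mat_vec_cong)
    also have "\<dots> = (\<lambda>k. l * mat_vec d (\<rho> x) u k)"
      using u unfolding V_def by (simp flip: mat_vec_mat_vec add: mat_vec_scale)
    finally show "mat_vec d (\<rho> x) u \<in> V" unfolding V_def using mat_vec_in_cvecs by blast
  qed
  moreover have "V \<subseteq> cvecs d" "(\<lambda>_. 0) \<in> V" unfolding V_def cvecs_def mat_vec_def by auto
  moreover have "\<forall>u\<in>V. \<forall>w\<in>V. (\<lambda>k. u k + w k) \<in> V"
    unfolding V_def cvecs_def by (auto simp: mat_vec_add distrib_left)
  moreover have "\<forall>c. \<forall>u\<in>V. (\<lambda>k. c * u k) \<in> V"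
    unfolding V_def cvecs_def by (auto simp: mat_vec_scale mult_ac)
  ultimately have "V = {\<lambda>_. 0} \<or> V = cvecs d"
    using irr unfolding irreducible_rep_def by blast
  moreover have "v \<in> V" using v unfolding V_def by auto
  ultimately have V: "V = cvecs d" using v(2) by auto
  have "M a b = (if a = b then l else 0)" if ab: "a < d" "b < d" for a b
  proof -
    define e where "e = (\<lambda>k. if k = b then 1 else (0::complex))"
    have "e \<in> V" unfolding V e_def cvecs_def using ab by auto
    then have "mat_vec d M e a = l * e a" unfolding V_def by simp
    moreover have "mat_vec d M e a = M a b"
      using ab unfolding mat_vec_def e_def by (simp add: sum_mult_delta_right)
    ultimately show ?thesis unfolding e_def by auto
  qed
  then show ?thesis by blast
qed

lemma mat_prod_scalar_right:
  assumes "\<forall>a<d. \<forall>b<d. P a b = (if a = b then c else 0)" and "b < d"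
  shows "mat_prod d M P a b = M a b * c"
proof -
  have "mat_prod d M P a b = (\<Sum>k<d. if k = b then M a k * c else 0)"
    unfolding mat_prod_def using assms by (intro sum.cong) auto
  with \<open>b < d\<close> show ?thesis by (simp add: sum.delta)
qed

lemma mat_prod_scalar_left:
  assumes "\<forall>a<d. \<forall>b<d. P a b = (if a = b then c else 0)" and "a < d"
  shows "mat_prod d P M a b = c * M a b"
proof -
  have "mat_prod d P M a b = (\<Sum>k<d. if k = a then c * M k b else 0)"
    unfolding mat_prod_def using assms by (intro sum.cong) auto
  with \<open>a < d\<close> show ?thesis by (simp add: sum.delta)
qed

lemma intertwiner_gram_scalar:
  assumes irr1: "irreducible_rep d1 \<rho>1" and irr2: "irreducible_rep d2 \<rho>2"
    and M: "intertwines d1 \<rho>1 d2 \<rho>2 M"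
    and nz: "a0 < d1" "b0 < d2" "M a0 b0 \<noteq> 0"
  shows "\<exists>r>0. (\<forall>a<d2. \<forall>b<d2. mat_prod d1 (mat_adjoint M) M a b = (if a = b then of_real r else 0))
             \<and> (\<forall>a<d1. \<forall>b<d1. mat_prod d2 M (mat_adjoint M) a b = (if a = b then of_real r else 0))"
proof -
  have ur: "unitary_rep d1 \<rho>1" "unitary_rep d2 \<rho>2"
    using irr1 irr2 unfolding irreducible_rep_def by blast+
  have N: "intertwines d2 \<rho>2 d1 \<rho>1 (mat_adjoint M)"
    using intertwines_adjoint[OF ur M] .
  obtain c where c: "\<forall>a<d2. \<forall>b<d2. mat_prod d1 (mat_adjoint M) M a b = (if a = b then c else 0)"
    using schur_lemma_scalar[OF irr2 intertwines_mat_prod[OF N M]] by blast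
  obtain c' where c': "\<forall>a<d1. \<forall>b<d1. mat_prod d2 M (mat_adjoint M) a b = (if a = b then c' else 0)"
    using schur_lemma_scalar[OF irr1 intertwines_mat_prod[OF M N]] by blast
  have "M a0 b0 * c = mat_prod d2 M (mat_prod d1 (mat_adjoint M) M) a0 b0"
    using mat_prod_scalar_right[OF c nz(2)] by simp
  also have "\<dots> = mat_prod d1 (mat_prod d2 M (mat_adjoint M)) M a0 b0"
    by (rule mat_prod_assoc[symmetric])
  also have "\<dots> = c' * M a0 b0"
    using mat_prod_scalar_left[OF c' nz(1)] by simp
  finally have "c' = c" using nz by simp
  define r where "r = (\<Sum>k<d2. (cmod (M a0 k))\<^sup>2)"
  have "(cmod (M a0 b0))\<^sup>2 \<le> r"
    unfolding r_def by (rule member_le_sum) (use nz in auto)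
  moreover have "(cmod (M a0 b0))\<^sup>2 > 0" using nz by simp
  ultimately have "r > 0" by linarith
  moreover have "c' = of_real r"
    using c' nz mat_prod_adjoint_diag[of d2 M a0] unfolding r_def by auto
  ultimately show ?thesis using c c' \<open>c' = c\<close> by (intro exI[of _ r]) auto
qed

lemma scaled_unitary_intertwiner_equiv_rep:
  assumes M: "intertwines d \<rho>1 d \<rho>2 M" and "0 < r"
    and MM: "\<forall>a<d. \<forall>b<d. mat_prod d M (mat_adjoint M) a b = (if a = b then of_real r else 0)"
  shows "equiv_rep d \<rho>2 d \<rho>1"
proof -
  define U where "U = (\<lambda>a b. M a b / of_real (sqrt r))"
  have sq: "of_real (sqrt r) * of_real (sqrt r) = (of_real r :: complex)"
    using \<open>0 < r\<close> by (simp flip: of_real_mult)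
  have "is_unitary_mat d U" unfolding is_unitary_mat_def
  proof (intro allI impI)
    fix a b assume ab: "a < d" "b < d"
    have "(\<Sum>k<d. U a k * cnj (U b k)) = mat_prod d M (mat_adjoint M) a b / of_real r"
      unfolding U_def mat_prod_def mat_adjoint_def sum_divide_distrib sq[symmetric]
      by (intro sum.cong) auto
    then show "(\<Sum>k<d. U a k * cnj (U b k)) = (if a = b then 1 else 0)"
      using MM ab \<open>0 < r\<close> by simp
  qed
  moreover have "mat_prod d U (\<rho>2 x) a b = mat_prod d (\<rho>1 x) U a b" if "a < d" "b < d" for x a b
    using intertwinesD[OF M that, of x]
    unfolding U_def mat_prod_def by (simp add: sum_divide_distrib[symmetric])
  ultimately show ?thesis unfolding equiv_rep_def by blast
qed

lemma schur_lemma_equiv_rep: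
  assumes irr1: "irreducible_rep d1 \<rho>1" and irr2: "irreducible_rep d2 \<rho>2"
    and M: "intertwines d1 \<rho>1 d2 \<rho>2 M"
    and nz: "a0 < d1" "b0 < d2" "M a0 b0 \<noteq> 0"
  shows "equiv_rep d2 \<rho>2 d1 \<rho>1"
proof -
  obtain r where "r > 0"
    and P: "\<forall>a<d2. \<forall>b<d2. mat_prod d1 (mat_adjoint M) M a b = (if a = b then of_real r else 0)"
    and Q: "\<forall>a<d1. \<forall>b<d1. mat_prod d2 M (mat_adjoint M) a b = (if a = b then of_real r else 0)"
    using intertwiner_gram_scalar[OF assms] by blast
  \<comment> \<open>Both Gram matrices are \<open>r\<close> times an identity, and they have the same trace.\<close>
  have "of_nat d2 * complex_of_real r = of_nat d1 * of_real r"
    using trace_mat_prod_adjoint[of d1 M d2] P Q by simp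
  then have "d1 = d2" using \<open>r > 0\<close> by simp
  then show ?thesis
    using scaled_unitary_intertwiner_equiv_rep[of d1 \<rho>1 \<rho>2 M r] M Q \<open>r > 0\<close> by simp
qed

subsection \<open>Haar measure on a compact group\<close>

locale compact_haar =
  fixes \<mu> :: "'g::{group_add,t2_space} measure"
  assumes compact_group: "compact_group TYPE('g)" and haar: "haar_prob \<mu>"
begin

sublocale prob_space \<mu>
  using haar unfolding haar_prob_def by (elim conjE)

lemma sets_haar: "sets \<mu> = sets borel"
  using haar unfolding haar_prob_def by (elim conjE)

lemma space_haar: "space \<mu> = UNIV"
  using sets_eq_imp_space_eq[OF sets_haar] by simp

lemma emeasure_translate:
  assumes "A \<in> sets \<mu>"
  shows "emeasure \<mu> ((\<lambda>y. x + y) ` A) = emeasure \<mu> A"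
proof -
  have "\<forall>x A. A \<in> sets borel \<longrightarrow> emeasure \<mu> ((\<lambda>y. x + y) ` A) = emeasure \<mu> A"
    using haar unfolding haar_prob_def by (elim conjE)
  with assms show ?thesis unfolding sets_haar by simp
qed

lemma continuous_imp_measurable:
  "continuous_on UNIV (h :: 'g \<Rightarrow> 'b::topological_space) \<Longrightarrow> h \<in> borel_measurable \<mu>"
  unfolding measurable_cong_sets[OF sets_haar refl] by (rule borel_measurable_continuous_onI)

lemma continuous_imp_integrable:
  assumes h: "continuous_on UNIV (h :: 'g \<Rightarrow> 'b::{banach,second_countable_topology})"
  shows "integrable \<mu> h"
proof -
  have "compact (UNIV :: 'g set)" using compact_group unfolding compact_group_def by blast
  then have "bounded (range h)" by (intro compact_imp_bounded compact_continuous_image h)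
  then obtain B where "\<forall>x. norm (h x) \<le> B" unfolding bounded_iff by blast
  then show ?thesis
    by (intro integrable_const_bound[where B = B] AE_I2 continuous_imp_measurable[OF h]) auto
qed

lemma continuous_on_translate:
  assumes "continuous_on UNIV (h :: 'g \<Rightarrow> 'b::topological_space)"
  shows "continuous_on UNIV (\<lambda>x. h (y + x))"
proof -
  have add: "continuous_on UNIV (\<lambda>p::'g \<times> 'g. fst p + snd p)"
    using compact_group unfolding compact_group_def by blast
  have "continuous_on UNIV ((\<lambda>p::'g \<times> 'g. fst p + snd p) \<circ> (\<lambda>x. (y, x)))"
    by (rule continuous_on_compose) (auto intro!: continuous_intros intro: continuous_on_subset[OF add])
  then have "continuous_on UNIV (\<lambda>x. y + x)" by (simp add: o_def)
  then have "continuous_on UNIV (h \<circ> (\<lambda>x. y + x))"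
    by (rule continuous_on_compose) (auto intro: continuous_on_subset[OF assms])
  then show ?thesis by (simp add: o_def)
qed

lemma measurable_translate: "(\<lambda>x. y + x) \<in> measurable \<mu> \<mu>"
  unfolding measurable_cong_sets[OF refl sets_haar]
  using continuous_on_translate[of "\<lambda>x. x" y] by (simp add: continuous_imp_measurable)

lemma distr_translate: "distr \<mu> \<mu> (\<lambda>x. y + x) = \<mu>"
proof (rule measure_eqI)
  fix A assume "A \<in> sets (distr \<mu> \<mu> (\<lambda>x. y + x))"
  then have A: "A \<in> sets \<mu>" by simp
  have "x \<in> (\<lambda>x. - y + x) ` A" if "y + x \<in> A" for x
    using that by (intro image_eqI[of _ _ "y + x"]) (simp_all add: add.assoc[symmetric])
  then have "(\<lambda>x. y + x) -` A \<inter> space \<mu> = (\<lambda>x. - y + x) ` A"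
    unfolding space_haar by (auto simp: add.assoc[symmetric])
  then show "emeasure (distr \<mu> \<mu> (\<lambda>x. y + x)) A = emeasure \<mu> A"
    using emeasure_distr[OF measurable_translate A] emeasure_translate[OF A] by simp
qed simp

lemma integral_translate:
  fixes h :: "'g \<Rightarrow> complex"
  assumes "h \<in> borel_measurable \<mu>"
  shows "(\<integral>x. h (y + x) \<partial>\<mu>) = (\<integral>x. h x \<partial>\<mu>)"
  using integral_distr[OF measurable_translate assms] distr_translate by simp

lemma averaged_coefficients_intertwine:
  assumes \<rho>1: "unitary_rep d1 \<rho>1" and \<rho>2: "unitary_rep d2 \<rho>2" and be: "b < d1" "e < d2"
  shows "intertwines d1 \<rho>1 d2 \<rho>2 (\<lambda>a c. \<integral>x. \<rho>1 x a b * cnj (\<rho>2 x c e) \<partial>\<mu>)"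
  unfolding intertwines_def
proof (intro allI impI)
  fix y a c assume ac: "a < d1" "c < d2"
  note cont1 = unitary_rep_continuous[OF \<rho>1] and cont2 = unitary_rep_continuous[OF \<rho>2]
  define h where "h = (\<lambda>x. \<rho>1 x a b * cnj (\<rho>2 (- y + x) c e))"
  have h: "continuous_on UNIV h"
    unfolding h_def by (intro continuous_intros cont1 continuous_on_translate cont2) (use ac be in auto)
  have hx: "h x = (\<Sum>k<d2. \<rho>1 x a b * cnj (\<rho>2 x k e) * \<rho>2 y k c)" for x
  proof -
    have "cnj (\<rho>2 (- y + x) c e) = \<rho>2 (- x + y) e c"
      using unitary_rep_uminus[OF \<rho>2 be(2) ac(2), of "- y + x"] by (simp add: minus_add)
    also have "\<dots> = (\<Sum>k<d2. cnj (\<rho>2 x k e) * \<rho>2 y k c)"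
      using unitary_rep_add[OF \<rho>2 be(2) ac(2)] unitary_rep_uminus[OF \<rho>2 be(2)] by simp
    finally show ?thesis unfolding h_def by (simp add: sum_distrib_left mult.assoc)
  qed
  have "mat_prod d2 (\<lambda>a c. \<integral>x. \<rho>1 x a b * cnj (\<rho>2 x c e) \<partial>\<mu>) (\<rho>2 y) a c
      = (\<Sum>k<d2. \<integral>x. \<rho>1 x a b * cnj (\<rho>2 x k e) * \<rho>2 y k c \<partial>\<mu>)"
    unfolding mat_prod_def by simp
  also have "\<dots> = (\<integral>x. h x \<partial>\<mu>)"
    unfolding hx
    by (rule Bochner_Integration.integral_sum[symmetric])
      (intro continuous_imp_integrable continuous_intros cont1 cont2, use ac be in auto)
  \<comment> \<open>Left invariance of the Haar measure moves \<open>\<rho>2 y\<close> across the integral to \<open>\<rho>1 y\<close>.\<close>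
  also have "\<dots> = (\<integral>x. h (y + x) \<partial>\<mu>)"
    by (rule integral_translate[symmetric]) (rule continuous_imp_measurable[OF h])
  also have "\<dots> = (\<integral>x. (\<Sum>k<d1. \<rho>1 y a k * (\<rho>1 x k b * cnj (\<rho>2 x c e))) \<partial>\<mu>)"
    unfolding h_def using unitary_rep_add[OF \<rho>1 ac(1) be(1)]
    by (simp add: add.assoc[symmetric] sum_distrib_right mult.assoc)
  also have "\<dots> = (\<Sum>k<d1. \<integral>x. \<rho>1 y a k * (\<rho>1 x k b * cnj (\<rho>2 x c e)) \<partial>\<mu>)"
    by (rule Bochner_Integration.integral_sum)
      (intro continuous_imp_integrable continuous_intros cont1 cont2, use ac be in auto)
  also have "\<dots> = mat_prod d1 (\<rho>1 y) (\<lambda>a c. \<integral>x. \<rho>1 x a b * cnj (\<rho>2 x c e) \<partial>\<mu>) a c"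
    unfolding mat_prod_def by simp
  finally show "mat_prod d2 (\<lambda>a c. \<integral>x. \<rho>1 x a b * cnj (\<rho>2 x c e) \<partial>\<mu>) (\<rho>2 y) a c =
      mat_prod d1 (\<rho>1 y) (\<lambda>a c. \<integral>x. \<rho>1 x a b * cnj (\<rho>2 x c e) \<partial>\<mu>) a c" .
qed

lemma schur_orthogonality_inequivalent:
  assumes irr1: "irreducible_rep d1 \<rho>1" and irr2: "irreducible_rep d2 \<rho>2"
    and "\<not> equiv_rep d2 \<rho>2 d1 \<rho>1"
    and "a < d1" "b < d1" "c < d2" "e < d2"
  shows "(\<integral>x. \<rho>1 x a b * cnj (\<rho>2 x c e) \<partial>\<mu>) = 0"
proof -
  have "unitary_rep d1 \<rho>1" "unitary_rep d2 \<rho>2"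
    using irr1 irr2 unfolding irreducible_rep_def by blast+
  from averaged_coefficients_intertwine[OF this \<open>b < d1\<close> \<open>e < d2\<close>] show ?thesis
    using schur_lemma_equiv_rep[OF irr1 irr2] assms(3-) by blast
qed

lemma schur_orthogonality_same:
  assumes irr: "irreducible_rep d \<rho>" and idx: "a < d" "b < d" "c < d" "e < d"
  shows "(\<integral>x. \<rho> x a b * cnj (\<rho> x c e) \<partial>\<mu>) = (if a = c \<and> b = e then 1 / of_nat d else 0)"
proof -
  have \<rho>: "unitary_rep d \<rho>" and "0 < d" using irr unfolding irreducible_rep_def by blast+
  obtain l where l: "\<forall>a<d. \<forall>c<d. (\<integral>x. \<rho> x a b * cnj (\<rho> x c e) \<partial>\<mu>) = (if a = c then l else 0)"
    using schur_lemma_scalar[OF irr averaged_coefficients_intertwine[OF \<rho> \<rho> idx(2,4)]] by blast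
  \<comment> \<open>The trace of the scalar matrix is computed by the orthonormality of the columns of \<open>\<rho> x\<close>.\<close>
  have "of_nat d * l = (\<Sum>a<d. \<integral>x. \<rho> x a b * cnj (\<rho> x a e) \<partial>\<mu>)"
    using l by simp
  also have "\<dots> = (\<integral>x. (\<Sum>a<d. cnj (\<rho> x a e) * \<rho> x a b) \<partial>\<mu>)"
    by (subst Bochner_Integration.integral_sum[symmetric])
      (auto intro!: continuous_imp_integrable continuous_intros unitary_rep_continuous[OF \<rho>]
        simp: idx mult.commute)
  also have "\<dots> = (if e = b then 1 else 0)"
    using unitary_rep_cols[OF \<rho> idx(4,2)] by (simp add: prob_space)
  finally have "l = (if b = e then 1 / of_nat d else 0)"
    using \<open>0 < d\<close> by (auto simp: field_simps)
  then show ?thesis using l idx by auto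
qed

end

lemma borel_measurable_cnj [measurable]:
  "g \<in> borel_measurable M \<Longrightarrow> (\<lambda>x. cnj (g x)) \<in> borel_measurable M"
proof -
  assume g: "g \<in> borel_measurable M"
  have "cnj \<in> borel_measurable borel"
    by (rule borel_measurable_continuous_onI) (intro continuous_intros)
  from measurable_compose[OF g this] show ?thesis by (simp add: o_def)
qed

lemma L2_iff: "g \<in> L2 M \<longleftrightarrow> g \<in> borel_measurable M \<and> integrable M (\<lambda>x. (cmod (g x))\<^sup>2)"
  unfolding L2_def by simp

lemma L2_measurable: "g \<in> L2 M \<Longrightarrow> g \<in> borel_measurable M"
  unfolding L2_iff by simp

lemma integrable_L2_product:
  assumes g: "g \<in> L2 M" and h: "h \<in> L2 M"
  shows "integrable M (\<lambda>x. g x * cnj (h x))"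
proof (rule Bochner_Integration.integrable_bound)
  show "integrable M (\<lambda>x. (cmod (g x))\<^sup>2 + (cmod (h x))\<^sup>2)"
    using g h unfolding L2_iff by (intro Bochner_Integration.integrable_add) auto
  show "(\<lambda>x. g x * cnj (h x)) \<in> borel_measurable M"
    using L2_measurable[OF g] L2_measurable[OF h] by measurable
  have "cmod (g x) * cmod (h x) \<le> (cmod (g x))\<^sup>2 + (cmod (h x))\<^sup>2" for x
    using sum_squares_bound[of "cmod (g x)" "cmod (h x)"]
      mult_nonneg_nonneg[OF norm_ge_zero norm_ge_zero, of "g x" "h x"] by linarith
  then show "AE x in M. norm (g x * cnj (h x)) \<le> norm ((cmod (g x))\<^sup>2 + (cmod (h x))\<^sup>2)"
    by (intro AE_I2) (simp add: norm_mult)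
qed

lemma L2_lincomb:
  assumes g: "g \<in> L2 M" and h: "h \<in> L2 M"
  shows "(\<lambda>x. a * g x + b * h x) \<in> L2 M"
  unfolding L2_iff
proof
  show m: "(\<lambda>x. a * g x + b * h x) \<in> borel_measurable M"
    using L2_measurable[OF g] L2_measurable[OF h] by measurable
  show "integrable M (\<lambda>x. (cmod (a * g x + b * h x))\<^sup>2)"
  proof (rule Bochner_Integration.integrable_bound)
    show "integrable M (\<lambda>x. 2 * (cmod a)\<^sup>2 * (cmod (g x))\<^sup>2 + 2 * (cmod b)\<^sup>2 * (cmod (h x))\<^sup>2)"
      using g h unfolding L2_iff by (intro Bochner_Integration.integrable_add integrable_mult_right) auto
    show "(\<lambda>x. (cmod (a * g x + b * h x))\<^sup>2) \<in> borel_measurable M" using m by measurable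
    have "(cmod (a * g x + b * h x))\<^sup>2 \<le> 2 * (cmod a * cmod (g x))\<^sup>2 + 2 * (cmod b * cmod (h x))\<^sup>2"
      for x
    proof -
      have "cmod (a * g x + b * h x) \<le> cmod a * cmod (g x) + cmod b * cmod (h x)"
        by (metis norm_mult norm_triangle_ineq)
      then have "(cmod (a * g x + b * h x))\<^sup>2 \<le> (cmod a * cmod (g x) + cmod b * cmod (h x))\<^sup>2"
        by (simp add: power_mono)
      then show ?thesis
        using sum_squares_bound[of "cmod a * cmod (g x)" "cmod b * cmod (h x)"]
        unfolding power2_sum by linarith
    qed
    then show "AE x in M. norm ((cmod (a * g x + b * h x))\<^sup>2)
        \<le> norm (2 * (cmod a)\<^sup>2 * (cmod (g x))\<^sup>2 + 2 * (cmod b)\<^sup>2 * (cmod (h x))\<^sup>2)"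
      by (intro AE_I2) (simp add: power_mult_distrib mult.assoc)
  qed
qed

lemma L2_zero: "(\<lambda>x. 0) \<in> L2 M"
  unfolding L2_iff by simp

lemma L2_scale: "g \<in> L2 M \<Longrightarrow> (\<lambda>x. a * g x) \<in> L2 M"
  using L2_lincomb[OF _ L2_zero, where a = a and b = 0] by simp

lemma L2_diff: "g \<in> L2 M \<Longrightarrow> h \<in> L2 M \<Longrightarrow> (\<lambda>x. g x - h x) \<in> L2 M"
  using L2_lincomb[of g M h 1 "- 1"] by simp

lemma L2_sum:
  assumes "finite J" "\<And>m. m \<in> J \<Longrightarrow> \<phi> m \<in> L2 M"
  shows "(\<lambda>x. \<Sum>m\<in>J. \<kappa> m * \<phi> m x) \<in> L2 M"
  using assms
proof (induction J rule: finite_induct)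
  case empty then show ?case using L2_zero by simp
next
  case (insert m J)
  then have "(\<lambda>x. \<kappa> m * \<phi> m x + 1 * (\<Sum>m\<in>J. \<kappa> m * \<phi> m x)) \<in> L2 M"
    by (intro L2_lincomb) auto
  with insert show ?case by simp
qed

lemma cnj_L2_inner: "cnj (L2_inner M g h) = L2_inner M h g"
  unfolding L2_inner_def
  by (subst Bochner_Integration.integral_cnj[symmetric])
    (simp add: mult.commute del: Bochner_Integration.integral_cnj)

lemma L2_inner_lincomb_left:
  assumes "g \<in> L2 M" "h \<in> L2 M" "k \<in> L2 M"
  shows "L2_inner M (\<lambda>x. a * g x + b * h x) k = a * L2_inner M g k + b * L2_inner M h k"
proof -
  have "L2_inner M (\<lambda>x. a * g x + b * h x) k
      = (\<integral>x. a * (g x * cnj (k x)) + b * (h x * cnj (k x)) \<partial>M)"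
    unfolding L2_inner_def by (simp add: algebra_simps)
  also have "\<dots> = (\<integral>x. a * (g x * cnj (k x)) \<partial>M) + (\<integral>x. b * (h x * cnj (k x)) \<partial>M)"
    using assms by (intro Bochner_Integration.integral_add integrable_mult_right integrable_L2_product)
  finally show ?thesis unfolding L2_inner_def by simp
qed

lemma L2_inner_diff_left:
  "g \<in> L2 M \<Longrightarrow> h \<in> L2 M \<Longrightarrow> k \<in> L2 M \<Longrightarrow>
    L2_inner M (\<lambda>x. g x - h x) k = L2_inner M g k - L2_inner M h k"
  using L2_inner_lincomb_left[of g M h k 1 "- 1"] by simp

lemma L2_inner_diff_right:
  "g \<in> L2 M \<Longrightarrow> h \<in> L2 M \<Longrightarrow> k \<in> L2 M \<Longrightarrow>
    L2_inner M k (\<lambda>x. g x - h x) = L2_inner M k g - L2_inner M k h"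
  using L2_inner_diff_left[of g M h k] by (metis cnj_L2_inner complex_cnj_diff)

lemma L2_inner_diff_diff:
  assumes "g \<in> L2 M" "h \<in> L2 M"
  shows "L2_inner M (\<lambda>x. g x - h x) (\<lambda>x. g x - h x)
    = L2_inner M g g - L2_inner M g h - (L2_inner M h g - L2_inner M h h)"
  using assms L2_diff[OF assms] by (simp add: L2_inner_diff_left L2_inner_diff_right)

lemma L2_inner_sum_left:
  assumes "finite J" "\<And>m. m \<in> J \<Longrightarrow> \<phi> m \<in> L2 M" "k \<in> L2 M"
  shows "L2_inner M (\<lambda>x. \<Sum>m\<in>J. \<kappa> m * \<phi> m x) k = (\<Sum>m\<in>J. \<kappa> m * L2_inner M (\<phi> m) k)"
proof -
  have "L2_inner M (\<lambda>x. \<Sum>m\<in>J. \<kappa> m * \<phi> m x) k = (\<integral>x. (\<Sum>m\<in>J. \<kappa> m * (\<phi> m x * cnj (k x))) \<partial>M)"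
    unfolding L2_inner_def by (simp add: sum_distrib_right mult.assoc)
  also have "\<dots> = (\<Sum>m\<in>J. (\<integral>x. \<kappa> m * (\<phi> m x * cnj (k x)) \<partial>M))"
    using assms by (intro Bochner_Integration.integral_sum integrable_mult_right integrable_L2_product) auto
  finally show ?thesis unfolding L2_inner_def by simp
qed

lemma L2_inner_sum_right:
  assumes "finite J" "\<And>m. m \<in> J \<Longrightarrow> \<phi> m \<in> L2 M" "k \<in> L2 M"
  shows "L2_inner M k (\<lambda>x. \<Sum>m\<in>J. \<kappa> m * \<phi> m x) = (\<Sum>m\<in>J. cnj (\<kappa> m) * L2_inner M k (\<phi> m))"
proof -
  have "L2_inner M k (\<lambda>x. \<Sum>m\<in>J. \<kappa> m * \<phi> m x) = cnj (\<Sum>m\<in>J. \<kappa> m * L2_inner M (\<phi> m) k)"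
    using L2_inner_sum_left[OF assms] cnj_L2_inner[of M "\<lambda>x. \<Sum>m\<in>J. \<kappa> m * \<phi> m x" k] by simp
  then show ?thesis by (simp add: cnj_L2_inner)
qed

lemma L2_inner_self: "L2_inner M g g = of_real (\<integral>x. (cmod (g x))\<^sup>2 \<partial>M)"
proof -
  have "(\<lambda>x. g x * cnj (g x)) = (\<lambda>x. complex_of_real ((cmod (g x))\<^sup>2))"
    by (simp only: complex_norm_square)
  then show ?thesis unfolding L2_inner_def by (simp only: integral_complex_of_real)
qed

lemma bessel_inequality:
  assumes E: "finite E" "orthonormal_L2 M E" and K: "K \<in> L2 M"
  shows "(\<Sum>e\<in>E. (cmod (L2_inner M e K))\<^sup>2) \<le> Re (L2_inner M K K)"
proof -
  have EL: "\<And>e. e \<in> E \<Longrightarrow> e \<in> L2 M"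
    and on: "\<And>e e'. e \<in> E \<Longrightarrow> e' \<in> E \<Longrightarrow> L2_inner M e e' = (if e = e' then 1 else 0)"
    using E(2) unfolding orthonormal_L2_def by blast+
  define \<alpha> where "\<alpha> e = L2_inner M K e" for e
  define L where "L = (\<lambda>x. \<Sum>e\<in>E. \<alpha> e * e x)"
  define s where "s = (\<Sum>e\<in>E. \<alpha> e * cnj (\<alpha> e))"
  have L: "L \<in> L2 M" unfolding L_def using E(1) EL by (rule L2_sum)
  have L_sum_left: "L2_inner M L k = (\<Sum>e\<in>E. \<alpha> e * L2_inner M e k)" if "k \<in> L2 M" for k
    unfolding L_def by (rule L2_inner_sum_left[of E "\<lambda>e. e"]) (use E(1) EL that in auto)
  have eL: "L2_inner M e L = cnj (\<alpha> e)" if "e \<in> E" for e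
  proof -
    have "L2_inner M e L = (\<Sum>e'\<in>E. cnj (\<alpha> e') * L2_inner M e e')"
      unfolding L_def by (rule L2_inner_sum_right[of E "\<lambda>e. e"]) (use E(1) EL that in auto)
    also have "\<dots> = (\<Sum>e'\<in>E. if e' = e then cnj (\<alpha> e') else 0)"
      using on that by (intro sum.cong) auto
    finally show ?thesis using E(1) that by simp
  qed
  \<comment> \<open>\<open>L\<close> is the orthogonal projection of \<open>K\<close> onto the span of \<open>E\<close>.\<close>
  have LK: "L2_inner M L K = s"
    unfolding s_def L_sum_left[OF K] \<alpha>_def by (simp add: cnj_L2_inner)
  have "cnj s = s" unfolding s_def by (simp add: cnj_sum mult.commute)
  with LK have KL: "L2_inner M K L = s" using cnj_L2_inner[of M L K] by simp
  have LL: "L2_inner M L L = s"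
    using eL unfolding s_def by (simp add: L_sum_left[OF L])
  have "L2_inner M (\<lambda>x. K x - L x) (\<lambda>x. K x - L x) = L2_inner M K K - s"
    unfolding L2_inner_diff_diff[OF K L] KL LK LL by simp
  moreover have "Re s = (\<Sum>e\<in>E. (cmod (L2_inner M e K))\<^sup>2)"
  proof -
    have "\<alpha> e * cnj (\<alpha> e) = of_real ((cmod (L2_inner M e K))\<^sup>2)" for e
      unfolding \<alpha>_def complex_norm_square by (simp add: cnj_L2_inner mult.commute)
    then show ?thesis unfolding s_def by simp
  qed
  moreover have "0 \<le> Re (L2_inner M (\<lambda>x. K x - L x) (\<lambda>x. K x - L x))"
    unfolding L2_inner_self by simp
  ultimately show ?thesis by simp
qed

lemma ennreal_le_of_le_add_scaled:
  fixes a b :: ennreal and c :: real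
  assumes "0 \<le> c" and le: "\<And>\<epsilon>. 0 < \<epsilon> \<Longrightarrow> a \<le> b + ennreal (c * \<epsilon>)"
  shows "a \<le> b"
proof (rule ennreal_le_epsilon)
  fix e :: real assume "0 < e"
  with \<open>0 \<le> c\<close> have pos: "0 < e / (c + 1)" and small: "c * (e / (c + 1)) \<le> e"
    by (auto simp: field_simps)
  have "a \<le> b + ennreal (c * (e / (c + 1)))" by (rule le[OF pos])
  also have "\<dots> \<le> b + ennreal e" using small by (intro add_left_mono ennreal_leI)
  finally show "a \<le> b + ennreal e" .
qed

lemma ennreal_le_of_le_scaled:
  fixes a b :: ennreal
  assumes le: "\<And>t. 0 < t \<Longrightarrow> a \<le> ennreal (1 + t) * b"
  shows "a \<le> b"
proof (rule ennreal_le_epsilon)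
  fix e :: real assume "b < Orderings.top" "0 < e"
  then obtain x where x: "b = ennreal x" "0 \<le> x" by (cases b rule: ennreal_cases) auto
  define t where "t = e / (x + 1)"
  have t: "0 < t" "t * x \<le> e"
    using \<open>0 < e\<close> x(2) unfolding t_def by (auto simp: field_simps)
  have "a \<le> ennreal (1 + t) * b" by (rule le[OF t(1)])
  also have "\<dots> = ennreal ((1 + t) * x)"
    unfolding x(1) using t(1) x(2) by (intro ennreal_mult[symmetric]) auto
  also have "\<dots> = b + ennreal (t * x)"
    unfolding x(1) using t(1) x(2) by (simp add: distrib_right ennreal_plus)
  also have "\<dots> \<le> b + ennreal e" using t(2) by (intro add_left_mono ennreal_leI)
  finally show "a \<le> b + ennreal e" .
qed

lemma cmod_add_square_le:
  fixes u v :: complex and t :: real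
  assumes "0 < t"
  shows "(cmod (u + v))\<^sup>2 \<le> (1 + t) * (cmod u)\<^sup>2 + (1 + 1 / t) * (cmod v)\<^sup>2"
proof -
  define a where "a = cmod u"
  define b where "b = cmod v"
  have "cmod (u + v) \<le> a + b" unfolding a_def b_def by (rule norm_triangle_ineq)
  then have 1: "(cmod (u + v))\<^sup>2 \<le> (a + b)\<^sup>2"
    by (simp add: power_mono)
  have "0 \<le> (t * a - b)\<^sup>2 / t" using \<open>0 < t\<close> by simp
  also have "(t * a - b)\<^sup>2 / t = t * a\<^sup>2 - 2 * a * b + b\<^sup>2 / t"
    using \<open>0 < t\<close> by (simp add: power2_diff field_simps power2_eq_square)
  finally have 2: "2 * a * b \<le> t * a\<^sup>2 + b\<^sup>2 / t" by simp
  have "(a + b)\<^sup>2 = a\<^sup>2 + 2 * a * b + b\<^sup>2" by (simp add: power2_sum)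
  also have "\<dots> \<le> (1 + t) * a\<^sup>2 + (1 + 1 / t) * b\<^sup>2" using 2 by (simp add: field_simps)
  finally show ?thesis using 1 unfolding a_def b_def by linarith
qed

lemma L2_norm_sq_mult_op_le:
  assumes f: "f \<in> borel_measurable M" "\<And>x. cmod (f x) \<le> B"
    and g: "g \<in> borel_measurable M" and T: "T \<in> borel_measurable M" and "0 < t"
  shows "L2_norm_sq M (mult_op f g)
    \<le> ennreal (1 + t) * (\<integral>\<^sup>+x. ennreal ((cmod (f x))\<^sup>2 * (cmod (T x))\<^sup>2) \<partial>M)
      + ennreal ((1 + 1 / t) * B\<^sup>2) * L2_norm_sq M (\<lambda>x. g x - T x)"
proof -
  define c where "c = (1 + 1 / t) * B\<^sup>2"
  have "0 \<le> c" unfolding c_def using \<open>0 < t\<close> by simp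
  have pointwise: "(cmod (mult_op f g x))\<^sup>2
      \<le> (1 + t) * ((cmod (f x))\<^sup>2 * (cmod (T x))\<^sup>2) + c * (cmod (g x - T x))\<^sup>2" for x
  proof -
    have "mult_op f g x = f x * T x + f x * (g x - T x)" unfolding mult_op_def by (simp add: algebra_simps)
    then have "(cmod (mult_op f g x))\<^sup>2
        \<le> (1 + t) * (cmod (f x * T x))\<^sup>2 + (1 + 1 / t) * (cmod (f x * (g x - T x)))\<^sup>2"
      using cmod_add_square_le[OF \<open>0 < t\<close>, of "f x * T x" "f x * (g x - T x)"] by simp
    also have "(1 + 1 / t) * (cmod (f x * (g x - T x)))\<^sup>2
        = (1 + 1 / t) * ((cmod (f x))\<^sup>2 * (cmod (g x - T x))\<^sup>2)"
      by (simp add: norm_mult power_mult_distrib)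
    also have "\<dots> \<le> (1 + 1 / t) * (B\<^sup>2 * (cmod (g x - T x))\<^sup>2)"
      using f(2)[of x] \<open>0 < t\<close> by (intro mult_left_mono mult_right_mono power_mono) auto
    finally show ?thesis unfolding c_def by (simp add: norm_mult power_mult_distrib mult.assoc)
  qed
  then have "ennreal ((cmod (mult_op f g x))\<^sup>2)
      \<le> ennreal (1 + t) * ennreal ((cmod (f x))\<^sup>2 * (cmod (T x))\<^sup>2)
        + ennreal c * ennreal ((cmod (g x - T x))\<^sup>2)" for x
    using ennreal_leI[OF pointwise[of x]] \<open>0 < t\<close> \<open>0 \<le> c\<close> by (simp add: ennreal_mult ennreal_plus)
  then have "L2_norm_sq M (mult_op f g)
      \<le> (\<integral>\<^sup>+x. ennreal (1 + t) * ennreal ((cmod (f x))\<^sup>2 * (cmod (T x))\<^sup>2)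
          + ennreal c * ennreal ((cmod (g x - T x))\<^sup>2) \<partial>M)"
    unfolding L2_norm_sq_def by (rule nn_integral_mono)
  also have "\<dots> = ennreal (1 + t) * (\<integral>\<^sup>+x. ennreal ((cmod (f x))\<^sup>2 * (cmod (T x))\<^sup>2) \<partial>M)
      + ennreal c * L2_norm_sq M (\<lambda>x. g x - T x)"
    unfolding L2_norm_sq_def using f(1) g T
    by (subst nn_integral_add; (subst nn_integral_cmult)?; measurable?) (simp_all add: nn_integral_cmult)
  finally show ?thesis unfolding c_def .
qed

lemma AE_eq_if_L2_norm_sq_small:
  assumes "g \<in> borel_measurable M" "T \<in> borel_measurable M"
    and small: "\<And>\<epsilon>. 0 < \<epsilon> \<Longrightarrow> L2_norm_sq M (\<lambda>x. g x - T x) < ennreal \<epsilon>"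
  shows "AE x in M. g x = T x"
proof -
  have "L2_norm_sq M (\<lambda>x. g x - T x) \<le> 0"
  proof (rule ennreal_le_epsilon)
    fix e :: real assume "0 < e"
    then show "L2_norm_sq M (\<lambda>x. g x - T x) \<le> 0 + ennreal e" using small[of e] by simp
  qed
  then have "(\<integral>\<^sup>+x. ennreal ((cmod (g x - T x))\<^sup>2) \<partial>M) = 0" unfolding L2_norm_sq_def by simp
  moreover have "(\<lambda>x. ennreal ((cmod (g x - T x))\<^sup>2)) \<in> borel_measurable M"
    using assms(1,2) by measurable
  ultimately have "AE x in M. ennreal ((cmod (g x - T x))\<^sup>2) = 0"
    using nn_integral_0_iff_AE by blast
  then show ?thesis by eventually_elim simp
qed

subsection \<open>Matrix coefficients and truncated Fourier expansions\<close>

definition fourier_sum :: "'g measure \<Rightarrow> ('i \<Rightarrow> nat) \<Rightarrow> ('i \<Rightarrow> 'g \<Rightarrow> nat \<Rightarrow> nat \<Rightarrow> complex)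
    \<Rightarrow> ('i \<Rightarrow> nat \<Rightarrow> nat \<Rightarrow> complex) \<Rightarrow> ('g \<Rightarrow> complex) \<Rightarrow> 'i set \<Rightarrow> 'g \<Rightarrow> complex" where
  "fourier_sum \<mu> d \<rho> Rh g F x = (\<Sum>i\<in>F. of_nat (d i) *
     mat_trace (d i) (mat_prod (d i) (mat_prod (d i) (Rh i) (fourier_coeff \<mu> g (\<rho> i))) (\<rho> i x)))"

definition weighted_HS_sum :: "('i \<Rightarrow> nat) \<Rightarrow> ('i \<Rightarrow> nat \<Rightarrow> nat \<Rightarrow> complex) \<Rightarrow> 'i set \<Rightarrow> real" where
  "weighted_HS_sum d Rh F = (\<Sum>i\<in>F. real (d i) * mat_HS_norm_sq (d i) (Rh i))"

definition coeff_index :: "('i \<Rightarrow> nat) \<Rightarrow> 'i set \<Rightarrow> ('i \<times> nat \<times> nat) set" where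
  "coeff_index d F = Sigma F (\<lambda>i. {..<d i} \<times> {..<d i})"

definition matrix_coeff :: "('i \<Rightarrow> 'g \<Rightarrow> nat \<Rightarrow> nat \<Rightarrow> complex) \<Rightarrow> 'i \<times> nat \<times> nat \<Rightarrow> 'g \<Rightarrow> complex" where
  "matrix_coeff \<rho> = (\<lambda>(i, a, b) y. \<rho> i y a b)"

text \<open>\<open>R\<close> maps the matrix coefficient \<open>(i, a, b)\<close> to this function of \<open>x\<close>.\<close>

definition twisted_coeff :: "('i \<Rightarrow> nat) \<Rightarrow> ('i \<Rightarrow> 'g \<Rightarrow> nat \<Rightarrow> nat \<Rightarrow> complex)
    \<Rightarrow> ('i \<Rightarrow> nat \<Rightarrow> nat \<Rightarrow> complex) \<Rightarrow> 'g \<Rightarrow> 'i \<times> nat \<times> nat \<Rightarrow> complex" where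
  "twisted_coeff d \<rho> Rh x = (\<lambda>(i, a, b). mat_prod (d i) (\<rho> i x) (Rh i) a b)"

text \<open>Evaluating a truncated expansion at \<open>x\<close> is taking the inner product with this kernel.\<close>

definition fourier_kernel :: "('i \<Rightarrow> nat) \<Rightarrow> ('i \<Rightarrow> 'g \<Rightarrow> nat \<Rightarrow> nat \<Rightarrow> complex)
    \<Rightarrow> ('i \<Rightarrow> nat \<Rightarrow> nat \<Rightarrow> complex) \<Rightarrow> 'i set \<Rightarrow> 'g \<Rightarrow> 'g \<Rightarrow> complex" where
  "fourier_kernel d \<rho> Rh F x = (\<lambda>y. \<Sum>m\<in>coeff_index d F.
     (of_nat (d (fst m)) * cnj (twisted_coeff d \<rho> Rh x m)) * matrix_coeff \<rho> m y)"

lemma finite_coeff_index: "finite F \<Longrightarrow> finite (coeff_index d F)"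
  unfolding coeff_index_def by auto

lemma sum_coeff_index:
  assumes "finite F"
  shows "(\<Sum>m\<in>coeff_index d F. G m) = (\<Sum>i\<in>F. \<Sum>a<d i. \<Sum>b<d i. G (i, a, b))"
proof -
  have "(\<Sum>m\<in>coeff_index d F. G m) = (\<Sum>i\<in>F. \<Sum>p\<in>{..<d i} \<times> {..<d i}. G (i, p))"
    unfolding coeff_index_def using assms by (subst sum.Sigma) auto
  then show ?thesis by (simp add: sum.cartesian_product)
qed

lemma weighted_HS_sum_nonneg: "0 \<le> weighted_HS_sum d Rh F"
  unfolding weighted_HS_sum_def mat_HS_norm_sq_def by (intro sum_nonneg mult_nonneg_nonneg) auto

definition normalized_coeff :: "('i \<Rightarrow> nat) \<Rightarrow> ('i \<Rightarrow> 'g \<Rightarrow> nat \<Rightarrow> nat \<Rightarrow> complex)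
    \<Rightarrow> 'i \<times> nat \<times> nat \<Rightarrow> 'g \<Rightarrow> complex" where
  "normalized_coeff d \<rho> m = (\<lambda>y. of_real (sqrt (real (d (fst m)))) * matrix_coeff \<rho> m y)"

lemma sum_pair_delta:
  assumes "a < n" "b < (n::nat)"
  shows "(\<Sum>c<n. \<Sum>c'<n. if c = a \<and> c' = b then z c c' else 0) = z a b"
proof -
  have "(\<Sum>c'<n. if c = a \<and> c' = b then z c c' else 0) = (if c = a then z c b else 0)" for c
    using assms(2) by (cases "c = a") (simp_all add: sum.delta)
  with assms(1) show ?thesis by (simp add: sum.delta)
qed

locale compact_dual = compact_haar \<mu> for \<mu> :: "'g::{group_add,t2_space} measure" +
  fixes I :: "'i set" and d :: "'i \<Rightarrow> nat" and \<rho> :: "'i \<Rightarrow> 'g \<Rightarrow> nat \<Rightarrow> nat \<Rightarrow> complex"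
  assumes dual_reps: "dual_reps TYPE('g) I d \<rho>"
begin

lemma irreducible_dual: "i \<in> I \<Longrightarrow> irreducible_rep (d i) (\<rho> i)"
  using dual_reps unfolding dual_reps_def by blast

lemma unitary_dual: "i \<in> I \<Longrightarrow> unitary_rep (d i) (\<rho> i)"
  using irreducible_dual unfolding irreducible_rep_def by blast

lemma dim_dual_pos: "i \<in> I \<Longrightarrow> 0 < d i"
  using irreducible_dual unfolding irreducible_rep_def by blast

lemma continuous_dual: "i \<in> I \<Longrightarrow> a < d i \<Longrightarrow> b < d i \<Longrightarrow> continuous_on UNIV (\<lambda>x. \<rho> i x a b)"
  using unitary_rep_continuous[OF unitary_dual] by blast

lemma coeff_indexD:
  "F \<subseteq> I \<Longrightarrow> (i, a, b) \<in> coeff_index d F \<Longrightarrow> i \<in> I \<and> a < d i \<and> b < d i"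
  unfolding coeff_index_def by auto

lemma matrix_coeff_L2: "F \<subseteq> I \<Longrightarrow> m \<in> coeff_index d F \<Longrightarrow> matrix_coeff \<rho> m \<in> L2 \<mu>"
  unfolding L2_iff using coeff_indexD[of F "fst m" "fst (snd m)" "snd (snd m)"]
  by (cases m) (auto intro!: continuous_imp_measurable continuous_imp_integrable continuous_intros
      continuous_dual simp: matrix_coeff_def)

lemma matrix_coeff_orthogonal:
  assumes "i \<in> I" "j \<in> I" "a < d i" "b < d i" "c < d j" "e < d j"
  shows "(\<integral>x. \<rho> i x a b * cnj (\<rho> j x c e) \<partial>\<mu>)
    = (if i = j \<and> a = c \<and> b = e then 1 / of_nat (d i) else 0)"
proof (cases "i = j")
  case True
  then show ?thesis using schur_orthogonality_same[OF irreducible_dual] assms by simp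
next
  case False
  then have "\<not> equiv_rep (d j) (\<rho> j) (d i) (\<rho> i)"
    using dual_reps assms(1,2) unfolding dual_reps_def by blast
  with False show ?thesis
    using schur_orthogonality_inequivalent[OF irreducible_dual irreducible_dual] assms by simp
qed

lemma fourier_kernel_L2:
  "finite F \<Longrightarrow> F \<subseteq> I \<Longrightarrow> fourier_kernel d \<rho> Rh F x \<in> L2 \<mu>"
  unfolding fourier_kernel_def by (intro L2_sum finite_coeff_index matrix_coeff_L2)

lemma L2_inner_matrix_coeff:
  assumes "F \<subseteq> I" "m \<in> coeff_index d F" "m' \<in> coeff_index d F"
  shows "L2_inner \<mu> (matrix_coeff \<rho> m) (matrix_coeff \<rho> m')
    = (if m' = m then 1 / of_nat (d (fst m)) else 0)"
  using assms matrix_coeff_orthogonal coeff_indexD[OF assms(1)]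
  by (cases m; cases m') (auto simp: L2_inner_def matrix_coeff_def)

lemma sum_twisted_coeff:
  assumes "finite F" "F \<subseteq> I"
  shows "(\<Sum>m\<in>coeff_index d F. real (d (fst m)) * (cmod (twisted_coeff d \<rho> Rh x m))\<^sup>2)
    = weighted_HS_sum d Rh F"
  unfolding sum_coeff_index[OF assms(1)] weighted_HS_sum_def twisted_coeff_def
  using assms(2) by (auto simp: sum_distrib_left[symmetric] mat_HS_norm_sq_unitary_left[OF unitary_dual]
      intro!: sum.cong)

lemma sum_ennreal_twisted_coeff:
  assumes "finite F" "F \<subseteq> I" "0 \<le> c"
  shows "(\<Sum>m\<in>coeff_index d F. ennreal (c * (real (d (fst m)) * (cmod (twisted_coeff d \<rho> Rh x m))\<^sup>2)))
    = ennreal c * ennreal (weighted_HS_sum d Rh F)"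
proof -
  have "(\<Sum>m\<in>coeff_index d F. ennreal (c * (real (d (fst m)) * (cmod (twisted_coeff d \<rho> Rh x m))\<^sup>2)))
      = ennreal (\<Sum>m\<in>coeff_index d F. c * (real (d (fst m)) * (cmod (twisted_coeff d \<rho> Rh x m))\<^sup>2))"
    using \<open>0 \<le> c\<close> by (intro sum_ennreal) auto
  also have "\<dots> = ennreal (c * weighted_HS_sum d Rh F)"
    unfolding sum_distrib_left[symmetric] sum_twisted_coeff[OF assms(1,2)] ..
  also have "\<dots> = ennreal c * ennreal (weighted_HS_sum d Rh F)"
    using \<open>0 \<le> c\<close> by (intro ennreal_mult) (auto simp: weighted_HS_sum_nonneg)
  finally show ?thesis .
qed

lemma fourier_sum_eq_L2_inner:
  assumes F: "finite F" "F \<subseteq> I" and g: "g \<in> L2 \<mu>"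
  shows "fourier_sum \<mu> d \<rho> Rh g F x = L2_inner \<mu> g (fourier_kernel d \<rho> Rh F x)"
proof -
  have "L2_inner \<mu> g (fourier_kernel d \<rho> Rh F x) = (\<Sum>m\<in>coeff_index d F.
      cnj (of_nat (d (fst m)) * cnj (twisted_coeff d \<rho> Rh x m)) * L2_inner \<mu> g (matrix_coeff \<rho> m))"
    unfolding fourier_kernel_def
    by (rule L2_inner_sum_right) (use finite_coeff_index[OF F(1)] matrix_coeff_L2[OF F(2)] g in auto)
  also have "\<dots> = (\<Sum>i\<in>F. \<Sum>a<d i. \<Sum>b<d i. of_nat (d i) *
      (mat_prod (d i) (\<rho> i x) (Rh i) a b * fourier_coeff \<mu> g (\<rho> i) b a))"
    unfolding sum_coeff_index[OF F(1)] twisted_coeff_def matrix_coeff_def L2_inner_def fourier_coeff_def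
    by (simp add: mult_ac)
  also have "\<dots> = fourier_sum \<mu> d \<rho> Rh g F x"
    unfolding fourier_sum_def mat_trace_mat_prod3 by (simp add: sum_distrib_left)
  finally show ?thesis by simp
qed

lemma L2_inner_fourier_kernel:
  assumes F: "finite F" "F \<subseteq> I"
  shows "L2_inner \<mu> (fourier_kernel d \<rho> Rh F x) (fourier_kernel d \<rho> Rh F x)
    = of_real (weighted_HS_sum d Rh F)"
proof -
  define J where "J = coeff_index d F"
  define \<kappa> where "\<kappa> m = of_nat (d (fst m)) * cnj (twisted_coeff d \<rho> Rh x m)" for m
  define K where "K = fourier_kernel d \<rho> Rh F x"
  have J: "finite J" "\<And>m. m \<in> J \<Longrightarrow> matrix_coeff \<rho> m \<in> L2 \<mu>"
    unfolding J_def using finite_coeff_index[OF F(1)] matrix_coeff_L2[OF F(2)] by auto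
  have K: "K = (\<lambda>y. \<Sum>m\<in>J. \<kappa> m * matrix_coeff \<rho> m y)"
    unfolding K_def J_def \<kappa>_def fourier_kernel_def ..
  have "L2_inner \<mu> K K = (\<Sum>m\<in>J. \<kappa> m * L2_inner \<mu> (matrix_coeff \<rho> m) K)"
    unfolding K by (simp add: L2_inner_sum_left[OF J] L2_sum[OF J])
  also have "\<dots> = (\<Sum>m\<in>J. \<kappa> m * (\<Sum>m'\<in>J. cnj (\<kappa> m') * L2_inner \<mu> (matrix_coeff \<rho> m) (matrix_coeff \<rho> m')))"
    unfolding K using J by (simp add: L2_inner_sum_right)
  also have "\<dots> = (\<Sum>m\<in>J. \<kappa> m * cnj (\<kappa> m) / of_nat (d (fst m)))"
    using J(1) unfolding J_def
    by (simp add: L2_inner_matrix_coeff[OF F(2)] if_distrib[of "(*) _"] sum.delta cong: sum.cong if_cong)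
  also have "\<dots> = (\<Sum>m\<in>J. of_real (real (d (fst m)) * (cmod (twisted_coeff d \<rho> Rh x m))\<^sup>2))"
  proof (intro sum.cong refl)
    fix m assume "m \<in> J"
    then have "d (fst m) > 0"
      using F(2) dim_dual_pos unfolding J_def coeff_index_def by auto
    then show "\<kappa> m * cnj (\<kappa> m) / of_nat (d (fst m))
        = of_real (real (d (fst m)) * (cmod (twisted_coeff d \<rho> Rh x m))\<^sup>2)"
      unfolding \<kappa>_def of_real_mult complex_norm_square by (simp add: field_simps)
  qed
  also have "\<dots> = of_real (weighted_HS_sum d Rh F)"
    unfolding J_def of_real_sum[symmetric] sum_twisted_coeff[OF F] ..
  finally show ?thesis unfolding K_def .
qed

lemma bessel_fourier_sum:
  assumes E: "finite E" "orthonormal_L2 \<mu> E" and F: "finite F" "F \<subseteq> I"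
  shows "(\<Sum>e\<in>E. (cmod (fourier_sum \<mu> d \<rho> Rh e F x))\<^sup>2) \<le> weighted_HS_sum d Rh F"
proof -
  have "e \<in> E \<Longrightarrow> e \<in> L2 \<mu>" for e using E(2) unfolding orthonormal_L2_def by blast
  then have "(\<Sum>e\<in>E. (cmod (fourier_sum \<mu> d \<rho> Rh e F x))\<^sup>2)
      = (\<Sum>e\<in>E. (cmod (L2_inner \<mu> e (fourier_kernel d \<rho> Rh F x)))\<^sup>2)"
    by (simp add: fourier_sum_eq_L2_inner[OF F])
  also have "\<dots> \<le> Re (L2_inner \<mu> (fourier_kernel d \<rho> Rh F x) (fourier_kernel d \<rho> Rh F x))"
    by (rule bessel_inequality[OF E fourier_kernel_L2[OF F]])
  finally show ?thesis by (simp add: L2_inner_fourier_kernel[OF F])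
qed

lemma L2_inner_normalized_coeff:
  assumes "F \<subseteq> I" "m \<in> coeff_index d F" "m' \<in> coeff_index d F"
  shows "L2_inner \<mu> (normalized_coeff d \<rho> m) (normalized_coeff d \<rho> m') = (if m' = m then 1 else 0)"
proof -
  have "0 < d (fst m)" using assms(1,2) dim_dual_pos unfolding coeff_index_def by auto
  moreover have "L2_inner \<mu> (normalized_coeff d \<rho> m) (normalized_coeff d \<rho> m')
      = of_real (sqrt (d (fst m))) * of_real (sqrt (d (fst m')))
        * L2_inner \<mu> (matrix_coeff \<rho> m) (matrix_coeff \<rho> m')"
  proof -
    have "(\<lambda>x. normalized_coeff d \<rho> m x * cnj (normalized_coeff d \<rho> m' x))
        = (\<lambda>x. (of_real (sqrt (d (fst m))) * of_real (sqrt (d (fst m'))))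
          * (matrix_coeff \<rho> m x * cnj (matrix_coeff \<rho> m' x)))"
      unfolding normalized_coeff_def by (simp add: mult_ac)
    then show ?thesis unfolding L2_inner_def by simp
  qed
  ultimately show ?thesis
    using L2_inner_matrix_coeff[OF assms] by (auto simp flip: of_real_mult)
qed

lemma orthonormal_normalized_coeffs:
  assumes "F \<subseteq> I"
  shows "inj_on (normalized_coeff d \<rho>) (coeff_index d F)"
    and "orthonormal_L2 \<mu> (normalized_coeff d \<rho> ` coeff_index d F)"
proof -
  note inner = L2_inner_normalized_coeff[OF assms]
  show inj: "inj_on (normalized_coeff d \<rho>) (coeff_index d F)"
  proof (rule inj_onI)
    fix m m' assume "m \<in> coeff_index d F" "m' \<in> coeff_index d F"
      and "normalized_coeff d \<rho> m = normalized_coeff d \<rho> m'"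
    then show "m = m'" using inner[of m m] inner[of m m'] by (metis zero_neq_one)
  qed
  have "normalized_coeff d \<rho> m \<in> L2 \<mu>" if "m \<in> coeff_index d F" for m
    unfolding normalized_coeff_def by (rule L2_scale[OF matrix_coeff_L2[OF assms that]])
  with inj show "orthonormal_L2 \<mu> (normalized_coeff d \<rho> ` coeff_index d F)"
    unfolding orthonormal_L2_def by (auto simp: inner inj_on_eq_iff)
qed

lemma continuous_twisted_coeff:
  "m \<in> coeff_index d I \<Longrightarrow> continuous_on UNIV (\<lambda>x. twisted_coeff d \<rho> Rh x m)"
  unfolding twisted_coeff_def mat_prod_def coeff_index_def
  by (auto intro!: continuous_intros continuous_dual)

lemma continuous_fourier_sum:
  "finite F \<Longrightarrow> F \<subseteq> I \<Longrightarrow> continuous_on UNIV (fourier_sum \<mu> d \<rho> Rh g F)"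
  unfolding fourier_sum_def mat_trace_def mat_prod_def
  by (intro continuous_intros) (auto intro!: continuous_dual)

lemma fourier_coeff_normalized_coeff:
  assumes "(i, a, b) \<in> coeff_index d I" "j \<in> I" "c < d j" "c' < d j"
  shows "fourier_coeff \<mu> (normalized_coeff d \<rho> (i, a, b)) (\<rho> j) c c'
    = (if j = i \<and> c' = a \<and> c = b then of_real (sqrt (d i)) / of_nat (d i) else 0)"
  using matrix_coeff_orthogonal[of i j a b c' c] assms
  unfolding fourier_coeff_def normalized_coeff_def matrix_coeff_def coeff_index_def
  by (auto simp: mult.assoc)

lemma fourier_sum_normalized_coeff:
  assumes m: "m \<in> coeff_index d I" and F: "finite F" "F \<subseteq> I" "fst m \<in> F"
  shows "fourier_sum \<mu> d \<rho> Rh (normalized_coeff d \<rho> m) F x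
    = of_real (sqrt (d (fst m))) * twisted_coeff d \<rho> Rh x m"
proof -
  obtain i a b where m_eq: "m = (i, a, b)" by (cases m)
  have i: "i \<in> I" "a < d i" "b < d i" "0 < d i"
    using m dim_dual_pos unfolding m_eq coeff_index_def by auto
  define s where "s = complex_of_real (sqrt (d i)) / of_nat (d i)"
  have "of_nat (d j) * mat_trace (d j) (mat_prod (d j) (mat_prod (d j) (Rh j)
          (fourier_coeff \<mu> (normalized_coeff d \<rho> m) (\<rho> j))) (\<rho> j x))
      = (if j = i then of_nat (d i) * (mat_prod (d i) (\<rho> i x) (Rh i) a b * s) else 0)"
    if "j \<in> F" for j
  proof -
    have "j \<in> I" using that F(2) by auto
    then have "(\<Sum>c<d j. \<Sum>c'<d j. mat_prod (d j) (\<rho> j x) (Rh j) c c'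
          * fourier_coeff \<mu> (normalized_coeff d \<rho> m) (\<rho> j) c' c)
        = (\<Sum>c<d j. \<Sum>c'<d j. if j = i \<and> c = a \<and> c' = b then mat_prod (d j) (\<rho> j x) (Rh j) c c' * s else 0)"
      unfolding m_eq s_def using fourier_coeff_normalized_coeff[OF m[unfolded m_eq]]
      by (intro sum.cong refl) auto
    also have "\<dots> = (if j = i then mat_prod (d i) (\<rho> i x) (Rh i) a b * s else 0)"
      by (cases "j = i") (simp_all add: sum_pair_delta[OF i(2,3)])
    finally show ?thesis unfolding mat_trace_mat_prod3 by simp
  qed
  then have "fourier_sum \<mu> d \<rho> Rh (normalized_coeff d \<rho> m) F x
      = (\<Sum>j\<in>F. if j = i then of_nat (d i) * (mat_prod (d i) (\<rho> i x) (Rh i) a b * s) else 0)"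
    unfolding fourier_sum_def by (rule sum.cong[OF refl])
  also have "\<dots> = of_real (sqrt (d i)) * mat_prod (d i) (\<rho> i x) (Rh i) a b"
    using F i unfolding m_eq s_def by (simp add: sum.delta')
  finally show ?thesis unfolding m_eq twisted_coeff_def by simp
qed

lemma measurable_fourier_sum:
  "finite F \<Longrightarrow> F \<subseteq> I \<Longrightarrow> (\<lambda>x. fourier_sum \<mu> d \<rho> Rh g F x) \<in> borel_measurable \<mu>"
  using continuous_imp_measurable[OF continuous_fourier_sum] by simp

end

locale fourier_multiplier = compact_dual \<mu> I d \<rho>
  for \<mu> :: "'g::{group_add,t2_space} measure" and I :: "'i set" and d \<rho> +
  fixes f :: "'g \<Rightarrow> complex" and B :: real
    and R :: "('g \<Rightarrow> complex) \<Rightarrow> 'g \<Rightarrow> complex" and Rh :: "'i \<Rightarrow> nat \<Rightarrow> nat \<Rightarrow> complex"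
  assumes f_measurable: "f \<in> borel_measurable \<mu>" and f_bounded: "\<And>x. cmod (f x) \<le> B"
    and R_L2: "\<And>g. g \<in> L2 \<mu> \<Longrightarrow> R g \<in> L2 \<mu>"
    and R_expansion: "\<And>g \<epsilon>. g \<in> L2 \<mu> \<Longrightarrow> 0 < \<epsilon> \<Longrightarrow> \<exists>F0. finite F0 \<and> F0 \<subseteq> I \<and>
           (\<forall>F. finite F \<and> F0 \<subseteq> F \<and> F \<subseteq> I \<longrightarrow>
              L2_norm_sq \<mu> (\<lambda>x. R g x - fourier_sum \<mu> d \<rho> Rh g F x) < ennreal \<epsilon>)"
begin

lemma R_normalized_coeff:
  assumes m: "m \<in> coeff_index d I"
  shows "AE x in \<mu>. R (normalized_coeff d \<rho> m) x = of_real (sqrt (d (fst m))) * twisted_coeff d \<rho> Rh x m"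
proof (rule AE_eq_if_L2_norm_sq_small)
  have \<psi>: "normalized_coeff d \<rho> m \<in> L2 \<mu>"
    unfolding normalized_coeff_def by (rule L2_scale[OF matrix_coeff_L2[OF subset_refl m]])
  then show "R (normalized_coeff d \<rho> m) \<in> borel_measurable \<mu>"
    by (intro L2_measurable R_L2)
  show "(\<lambda>x. of_real (sqrt (d (fst m))) * twisted_coeff d \<rho> Rh x m) \<in> borel_measurable \<mu>"
    using continuous_twisted_coeff[OF m]
    by (intro continuous_imp_measurable continuous_on_mult continuous_on_const)
  fix \<epsilon> :: real assume "0 < \<epsilon>"
  obtain F0 where F0: "finite F0 \<and> F0 \<subseteq> I \<and> (\<forall>F. finite F \<and> F0 \<subseteq> F \<and> F \<subseteq> I \<longrightarrow>
      L2_norm_sq \<mu> (\<lambda>x. R (normalized_coeff d \<rho> m) x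
        - fourier_sum \<mu> d \<rho> Rh (normalized_coeff d \<rho> m) F x) < ennreal \<epsilon>)"
    using R_expansion[OF \<psi> \<open>0 < \<epsilon>\<close>] by (rule exE)
  define F where "F = insert (fst m) F0"
  have "fst m \<in> I" using m unfolding coeff_index_def by auto
  with F0 have F: "finite F" "F \<subseteq> I" "fst m \<in> F" "F0 \<subseteq> F" unfolding F_def by auto
  have "(\<lambda>x. fourier_sum \<mu> d \<rho> Rh (normalized_coeff d \<rho> m) F x)
      = (\<lambda>x. of_real (sqrt (d (fst m))) * twisted_coeff d \<rho> Rh x m)"
    using fourier_sum_normalized_coeff[OF m F(1-3)] by (rule ext)
  moreover have "L2_norm_sq \<mu> (\<lambda>x. R (normalized_coeff d \<rho> m) x
      - fourier_sum \<mu> d \<rho> Rh (normalized_coeff d \<rho> m) F x) < ennreal \<epsilon>"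
    using F0 F(1,2,4) by blast
  ultimately show "L2_norm_sq \<mu> (\<lambda>x. R (normalized_coeff d \<rho> m) x
      - of_real (sqrt (d (fst m))) * twisted_coeff d \<rho> Rh x m) < ennreal \<epsilon>"
    by (simp only:)
qed

lemma L2_norm_sq_mult_R_normalized_coeff:
  assumes "m \<in> coeff_index d I"
  shows "L2_norm_sq \<mu> (mult_op f (R (normalized_coeff d \<rho> m)))
    = (\<integral>\<^sup>+x. ennreal ((cmod (f x))\<^sup>2 * (real (d (fst m)) * (cmod (twisted_coeff d \<rho> Rh x m))\<^sup>2)) \<partial>\<mu>)"
  unfolding L2_norm_sq_def mult_op_def
proof (rule nn_integral_cong_AE)
  show "AE x in \<mu>. ennreal ((cmod (f x * R (normalized_coeff d \<rho> m) x))\<^sup>2)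
      = ennreal ((cmod (f x))\<^sup>2 * (real (d (fst m)) * (cmod (twisted_coeff d \<rho> Rh x m))\<^sup>2))"
    using R_normalized_coeff[OF assms] by eventually_elim (simp add: norm_mult power_mult_distrib)
qed

lemma weighted_HS_sum_le_HS_norm_sq:
  assumes F: "finite F" "F \<subseteq> I"
  shows "L2_norm_sq \<mu> f * ennreal (weighted_HS_sum d Rh F) \<le> HS_norm_sq \<mu> (\<lambda>g. mult_op f (R g))"
proof -
  define J where "J = coeff_index d F"
  have J: "finite J" "J \<subseteq> coeff_index d I"
    unfolding J_def coeff_index_def using F by auto
  note \<psi> = orthonormal_normalized_coeffs[OF F(2), folded J_def]
  define w where "w m x = ennreal ((cmod (f x))\<^sup>2 * (real (d (fst m)) * (cmod (twisted_coeff d \<rho> Rh x m))\<^sup>2))"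
    for m x
  have "L2_norm_sq \<mu> f * ennreal (weighted_HS_sum d Rh F)
      = (\<integral>\<^sup>+x. ennreal ((cmod (f x))\<^sup>2) * ennreal (weighted_HS_sum d Rh F) \<partial>\<mu>)"
    unfolding L2_norm_sq_def using f_measurable by (intro nn_integral_multc[symmetric]) measurable
  also have "\<dots> = (\<integral>\<^sup>+x. (\<Sum>m\<in>J. w m x) \<partial>\<mu>)"
    unfolding w_def J_def by (rule nn_integral_cong, rule sum_ennreal_twisted_coeff[OF F, symmetric]) simp
  also have "\<dots> = (\<Sum>m\<in>J. \<integral>\<^sup>+x. w m x \<partial>\<mu>)"
  proof (rule nn_integral_sum)
    fix m assume "m \<in> J"
    then have "(\<lambda>x. twisted_coeff d \<rho> Rh x m) \<in> borel_measurable \<mu>"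
      by (intro continuous_imp_measurable continuous_twisted_coeff) (use J(2) in auto)
    with f_measurable show "w m \<in> borel_measurable \<mu>" unfolding w_def by measurable
  qed
  also have "\<dots> = (\<Sum>m\<in>J. L2_norm_sq \<mu> (mult_op f (R (normalized_coeff d \<rho> m))))"
  proof (rule sum.cong[OF refl])
    fix m assume "m \<in> J"
    then show "(\<integral>\<^sup>+x. w m x \<partial>\<mu>) = L2_norm_sq \<mu> (mult_op f (R (normalized_coeff d \<rho> m)))"
      using L2_norm_sq_mult_R_normalized_coeff[of m] J(2) unfolding w_def by auto
  qed
  also have "\<dots> = (\<Sum>e\<in>normalized_coeff d \<rho> ` J. L2_norm_sq \<mu> (mult_op f (R e)))"
    using \<psi>(1) by (simp add: sum.reindex)
  also have "\<dots> \<le> HS_norm_sq \<mu> (\<lambda>g. mult_op f (R g))"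
    unfolding HS_norm_sq_def using J(1) \<psi>(2) by (intro SUP_upper) auto
  finally show ?thesis .
qed

lemma common_truncation:
  assumes E: "finite E" "E \<subseteq> L2 \<mu>" and "0 < \<epsilon>"
  obtains F where "finite F" "F \<subseteq> I"
    "\<And>e. e \<in> E \<Longrightarrow> L2_norm_sq \<mu> (\<lambda>x. R e x - fourier_sum \<mu> d \<rho> Rh e F x) < ennreal \<epsilon>"
proof -
  have "\<forall>e\<in>E. \<exists>F0. finite F0 \<and> F0 \<subseteq> I \<and> (\<forall>F. finite F \<and> F0 \<subseteq> F \<and> F \<subseteq> I \<longrightarrow>
      L2_norm_sq \<mu> (\<lambda>x. R e x - fourier_sum \<mu> d \<rho> Rh e F x) < ennreal \<epsilon>)"
    using E(2) \<open>0 < \<epsilon>\<close> by (intro ballI R_expansion) auto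
  then obtain G where G: "\<forall>e\<in>E. finite (G e) \<and> G e \<subseteq> I \<and> (\<forall>F. finite F \<and> G e \<subseteq> F \<and> F \<subseteq> I \<longrightarrow>
      L2_norm_sq \<mu> (\<lambda>x. R e x - fourier_sum \<mu> d \<rho> Rh e F x) < ennreal \<epsilon>)"
    by (rule bchoice[THEN exE])
  show ?thesis
  proof (rule that[of "\<Union>(G ` E)"])
    show "finite (\<Union>(G ` E))" "\<Union>(G ` E) \<subseteq> I" using E(1) G by auto
    fix e assume "e \<in> E"
    then have "finite (\<Union>(G ` E)) \<and> G e \<subseteq> \<Union>(G ` E) \<and> \<Union>(G ` E) \<subseteq> I"
      using E(1) G by auto
    then show "L2_norm_sq \<mu> (\<lambda>x. R e x - fourier_sum \<mu> d \<rho> Rh e (\<Union>(G ` E)) x) < ennreal \<epsilon>"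
      using bspec[OF G \<open>e \<in> E\<close>] by (elim conjE allE impE) auto
  qed
qed

lemma sum_nn_integral_fourier_sum_le:
  assumes E: "finite E" "orthonormal_L2 \<mu> E" and F: "finite F" "F \<subseteq> I"
  shows "(\<Sum>e\<in>E. \<integral>\<^sup>+x. ennreal ((cmod (f x))\<^sup>2 * (cmod (fourier_sum \<mu> d \<rho> Rh e F x))\<^sup>2) \<partial>\<mu>)
    \<le> L2_norm_sq \<mu> f * ennreal (weighted_HS_sum d Rh F)"
proof -
  have "(\<Sum>e\<in>E. \<integral>\<^sup>+x. ennreal ((cmod (f x))\<^sup>2 * (cmod (fourier_sum \<mu> d \<rho> Rh e F x))\<^sup>2) \<partial>\<mu>)
      = (\<integral>\<^sup>+x. (\<Sum>e\<in>E. ennreal ((cmod (f x))\<^sup>2 * (cmod (fourier_sum \<mu> d \<rho> Rh e F x))\<^sup>2)) \<partial>\<mu>)"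
    by (rule nn_integral_sum[symmetric]) (use f_measurable measurable_fourier_sum[OF F] in measurable)
  also have "\<dots> \<le> (\<integral>\<^sup>+x. ennreal ((cmod (f x))\<^sup>2) * ennreal (weighted_HS_sum d Rh F) \<partial>\<mu>)"
  proof (rule nn_integral_mono)
    fix x
    have "(\<Sum>e\<in>E. ennreal ((cmod (f x))\<^sup>2 * (cmod (fourier_sum \<mu> d \<rho> Rh e F x))\<^sup>2))
        = ennreal ((cmod (f x))\<^sup>2 * (\<Sum>e\<in>E. (cmod (fourier_sum \<mu> d \<rho> Rh e F x))\<^sup>2))"
      by (subst sum_ennreal) (auto simp: sum_distrib_left)
    also have "\<dots> \<le> ennreal ((cmod (f x))\<^sup>2 * weighted_HS_sum d Rh F)"
      by (intro ennreal_leI mult_left_mono bessel_fourier_sum[OF E F]) simp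
    also have "\<dots> = ennreal ((cmod (f x))\<^sup>2) * ennreal (weighted_HS_sum d Rh F)"
      by (rule ennreal_mult) (auto simp: weighted_HS_sum_nonneg)
    finally show "(\<Sum>e\<in>E. ennreal ((cmod (f x))\<^sup>2 * (cmod (fourier_sum \<mu> d \<rho> Rh e F x))\<^sup>2))
        \<le> ennreal ((cmod (f x))\<^sup>2) * ennreal (weighted_HS_sum d Rh F)" .
  qed
  also have "\<dots> = L2_norm_sq \<mu> f * ennreal (weighted_HS_sum d Rh F)"
    unfolding L2_norm_sq_def using f_measurable by (intro nn_integral_multc) measurable
  finally show ?thesis .
qed

lemma L2_norm_sq_mult_R_le:
  assumes "e \<in> L2 \<mu>" and F: "finite F" "F \<subseteq> I" and "0 < t"
  shows "L2_norm_sq \<mu> (mult_op f (R e))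
    \<le> ennreal (1 + t) * (\<integral>\<^sup>+x. ennreal ((cmod (f x))\<^sup>2 * (cmod (fourier_sum \<mu> d \<rho> Rh e F x))\<^sup>2) \<partial>\<mu>)
      + ennreal ((1 + 1 / t) * B\<^sup>2) * L2_norm_sq \<mu> (\<lambda>x. R e x - fourier_sum \<mu> d \<rho> Rh e F x)"
  using L2_norm_sq_mult_op_le[OF f_measurable f_bounded L2_measurable[OF R_L2[OF \<open>e \<in> L2 \<mu>\<close>]]
      measurable_fourier_sum[OF F] \<open>0 < t\<close>] .

lemma sum_L2_norm_sq_mult_R_le:
  assumes E: "finite E" "orthonormal_L2 \<mu> E"
    and S: "\<And>F. finite F \<Longrightarrow> F \<subseteq> I \<Longrightarrow> ennreal (weighted_HS_sum d Rh F) \<le> S"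
    and "0 < t" "0 < \<epsilon>"
  shows "(\<Sum>e\<in>E. L2_norm_sq \<mu> (mult_op f (R e)))
    \<le> ennreal (1 + t) * (L2_norm_sq \<mu> f * S) + ennreal (real (card E) * ((1 + 1 / t) * B\<^sup>2) * \<epsilon>)"
proof -
  have EL: "E \<subseteq> L2 \<mu>" using E(2) unfolding orthonormal_L2_def by blast
  obtain F where F: "finite F" "F \<subseteq> I"
    and small: "\<And>e. e \<in> E \<Longrightarrow> L2_norm_sq \<mu> (\<lambda>x. R e x - fourier_sum \<mu> d \<rho> Rh e F x) < ennreal \<epsilon>"
    using common_truncation[OF E(1) EL \<open>0 < \<epsilon>\<close>] by blast
  define c where "c = (1 + 1 / t) * B\<^sup>2"
  have "0 \<le> c" unfolding c_def using \<open>0 < t\<close> by simp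
  define A where "A e = (\<integral>\<^sup>+x. ennreal ((cmod (f x))\<^sup>2 * (cmod (fourier_sum \<mu> d \<rho> Rh e F x))\<^sup>2) \<partial>\<mu>)"
    for e
  have "(\<Sum>e\<in>E. L2_norm_sq \<mu> (mult_op f (R e))) \<le> (\<Sum>e\<in>E. ennreal (1 + t) * A e + ennreal c * ennreal \<epsilon>)"
  proof (rule sum_mono)
    fix e assume e: "e \<in> E"
    have "L2_norm_sq \<mu> (mult_op f (R e))
        \<le> ennreal (1 + t) * A e + ennreal c * L2_norm_sq \<mu> (\<lambda>x. R e x - fourier_sum \<mu> d \<rho> Rh e F x)"
      unfolding A_def c_def using e EL by (intro L2_norm_sq_mult_R_le F \<open>0 < t\<close>) auto
    also have "\<dots> \<le> ennreal (1 + t) * A e + ennreal c * ennreal \<epsilon>"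
      using small[OF e] by (intro add_left_mono mult_left_mono) auto
    finally show "L2_norm_sq \<mu> (mult_op f (R e)) \<le> ennreal (1 + t) * A e + ennreal c * ennreal \<epsilon>" .
  qed
  also have "\<dots> = ennreal (1 + t) * (\<Sum>e\<in>E. A e) + of_nat (card E) * (ennreal c * ennreal \<epsilon>)"
    by (simp add: sum.distrib sum_distrib_left)
  also have "\<dots> \<le> ennreal (1 + t) * (L2_norm_sq \<mu> f * S) + of_nat (card E) * (ennreal c * ennreal \<epsilon>)"
  proof -
    have "(\<Sum>e\<in>E. A e) \<le> L2_norm_sq \<mu> f * ennreal (weighted_HS_sum d Rh F)"
      unfolding A_def by (rule sum_nn_integral_fourier_sum_le[OF E F])
    also have "\<dots> \<le> L2_norm_sq \<mu> f * S" using S[OF F] by (rule mult_left_mono) simp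
    finally show ?thesis by (intro add_right_mono mult_left_mono) auto
  qed
  also have "of_nat (card E) * (ennreal c * ennreal \<epsilon>) = ennreal (real (card E) * c * \<epsilon>)"
  proof -
    have "(of_nat (card E) :: ennreal) = ennreal (real (card E))"
      by (rule ennreal_of_nat_eq_real_of_nat)
    moreover have "ennreal c * ennreal \<epsilon> = ennreal (c * \<epsilon>)"
      using \<open>0 \<le> c\<close> \<open>0 < \<epsilon>\<close> by (intro ennreal_mult[symmetric]) auto
    ultimately show ?thesis
      using \<open>0 \<le> c\<close> \<open>0 < \<epsilon>\<close> by (simp add: ennreal_mult[symmetric] mult.assoc)
  qed
  finally show ?thesis unfolding c_def .
qed

lemma HS_norm_sq_le:
  assumes S: "\<And>F. finite F \<Longrightarrow> F \<subseteq> I \<Longrightarrow> ennreal (weighted_HS_sum d Rh F) \<le> S"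
  shows "HS_norm_sq \<mu> (\<lambda>g. mult_op f (R g)) \<le> L2_norm_sq \<mu> f * S"
  unfolding HS_norm_sq_def
proof (rule SUP_least)
  fix E assume "E \<in> {E. finite E \<and> orthonormal_L2 \<mu> E}"
  then have E: "finite E" "orthonormal_L2 \<mu> E" by auto
  show "(\<Sum>e\<in>E. L2_norm_sq \<mu> (mult_op f (R e))) \<le> L2_norm_sq \<mu> f * S"
  proof (rule ennreal_le_of_le_scaled)
    fix t :: real assume "0 < t"
    show "(\<Sum>e\<in>E. L2_norm_sq \<mu> (mult_op f (R e))) \<le> ennreal (1 + t) * (L2_norm_sq \<mu> f * S)"
    proof (rule ennreal_le_of_le_add_scaled)
      show "0 \<le> real (card E) * ((1 + 1 / t) * B\<^sup>2)" using \<open>0 < t\<close> by simp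
      fix \<epsilon> :: real assume "0 < \<epsilon>"
      then show "(\<Sum>e\<in>E. L2_norm_sq \<mu> (mult_op f (R e)))
          \<le> ennreal (1 + t) * (L2_norm_sq \<mu> f * S) + ennreal (real (card E) * ((1 + 1 / t) * B\<^sup>2) * \<epsilon>)"
        using sum_L2_norm_sq_mult_R_le[OF E S \<open>0 < t\<close> \<open>0 < \<epsilon>\<close>] by simp
    qed
  qed
qed

end

theorem mainTheorem7:
  fixes \<mu> :: "'g::{group_add,t2_space} measure"
    and f :: "'g \<Rightarrow> complex"
    and R :: "('g \<Rightarrow> complex) \<Rightarrow> ('g \<Rightarrow> complex)"
    and I :: "'i set" and d :: "'i \<Rightarrow> nat"
    and \<rho> :: "'i \<Rightarrow> 'g \<Rightarrow> nat \<Rightarrow> nat \<Rightarrow> complex"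
    and Rh :: "'i \<Rightarrow> nat \<Rightarrow> nat \<Rightarrow> complex"
  assumes "compact_group TYPE('g)"
    and "haar_prob \<mu>"
    and "f \<in> borel_measurable \<mu>" and "\<exists>B. \<forall>x. cmod (f x) \<le> B"
    and "dual_reps TYPE('g) I d \<rho>"
    and "\<forall>g\<in>L2 \<mu>. R g \<in> L2 \<mu>"
    and "\<forall>g\<in>L2 \<mu>. \<forall>x. AE y in \<mu>. R (left_mult x g) y = left_mult x (R g) y"
    and "\<forall>g\<in>L2 \<mu>. \<forall>\<epsilon>>0. \<exists>F0. finite F0 \<and> F0 \<subseteq> I \<and>
           (\<forall>F. finite F \<and> F0 \<subseteq> F \<and> F \<subseteq> I \<longrightarrow>
              L2_norm_sq \<mu> (\<lambda>x. R g x - (\<Sum>i\<in>F. of_nat (d i) *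
                 mat_trace (d i) (mat_prod (d i) (mat_prod (d i) (Rh i) (fourier_coeff \<mu> g (\<rho> i))) (\<rho> i x))))
              < ennreal \<epsilon>)"
  shows "HS_norm_sq \<mu> (\<lambda>g. mult_op f (R g))
           = L2_norm_sq \<mu> f * (\<Sum>\<^sub>\<infinity>i\<in>I. ennreal (real (d i) * mat_HS_norm_sq (d i) (Rh i)))"
proof -
  obtain B where B: "\<And>x. cmod (f x) \<le> B" using assms(4) by blast
  interpret fourier_multiplier \<mu> I d \<rho> f B R Rh
  proof
    show "\<And>g \<epsilon>. g \<in> L2 \<mu> \<Longrightarrow> 0 < \<epsilon> \<Longrightarrow> \<exists>F0. finite F0 \<and> F0 \<subseteq> I \<and>
        (\<forall>F. finite F \<and> F0 \<subseteq> F \<and> F \<subseteq> I \<longrightarrow>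
          L2_norm_sq \<mu> (\<lambda>x. R g x - fourier_sum \<mu> d \<rho> Rh g F x) < ennreal \<epsilon>)"
      using assms(8) unfolding fourier_sum_def by blast
  qed (use assms(1-3,5,6) B in auto)
  have S: "(\<Sum>\<^sub>\<infinity>i\<in>I. ennreal (real (d i) * mat_HS_norm_sq (d i) (Rh i)))
      = (SUP F\<in>{F. finite F \<and> F \<subseteq> I}. ennreal (weighted_HS_sum d Rh F))"
    unfolding nonneg_infsum_complete[of I, OF zero_le] weighted_HS_sum_def
    by (intro SUP_cong refl sum_ennreal) (auto simp: mat_HS_norm_sq_def intro!: mult_nonneg_nonneg sum_nonneg)
  show ?thesis
    unfolding S
  proof (rule antisym)
    show "HS_norm_sq \<mu> (\<lambda>g. mult_op f (R g))
        \<le> L2_norm_sq \<mu> f * (SUP F\<in>{F. finite F \<and> F \<subseteq> I}. ennreal (weighted_HS_sum d Rh F))"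
      by (rule HS_norm_sq_le) (auto intro: SUP_upper)
    show "L2_norm_sq \<mu> f * (SUP F\<in>{F. finite F \<and> F \<subseteq> I}. ennreal (weighted_HS_sum d Rh F))
        \<le> HS_norm_sq \<mu> (\<lambda>g. mult_op f (R g))"
      unfolding SUP_mult_left_ennreal by (rule SUP_least) (auto intro: weighted_HS_sum_le_HS_norm_sq)
  qed
qed

end
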